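(* In the setting described in the context, the left kernel of $\mathbf G$ has dimension equal to the number of vertices of the mesh: $$\dim\ker(\mathbf G^T)=|\mathring{\mathcal V}|+|\mathcal V_\partial|=|\mathcal V|,$$ and a basis of $\ker(\mathbf G^T)$ can be constructed consisting of one vector associated with each vertex of the mesh.
   Context: $\Omega\subset\mathbb{R}^2$ is a bounded, connected, open polygonal domain (possibly with holes) and $\mathcal T$ a conforming triangulation of $\Omega$ with edges $\mathcal E$ and vertices $\mathcal V$, each triangle having at most one edge on $\partial\Omega$. $\mathring{\mathcal E}$ is the set of internal edges (shared by two triangles), $\mathring{\mathcal V}$ the set of internal vertices and $\mathcal V_\partial$ the set of boundary vertices. Every edge is oriented (from $A=(x_A,y_A)$ to $B=(x_B,y_B)$) and all triangles have the same rotation sense; $\delta_T^\Gamma=+1$ if the orientation of the edge $\Gamma\subset\partial T$ agrees with that of $\partial T$, $-1$ otherwise. $\boldsymbol{\Delta}$ is the $|\mathcal T|\times|\mathring{\mathcal E}|$ matrix with entry $\delta_T^\Gamma$ if $\Gamma\in\mathring{\mathcal E}$ is an edge of $T$ and $0$ otherwise. For each internal edge, $a_\Gamma=y_B-y_A$, $b_\Gamma=x_A-x_B$, $c_\Gamma=x_By_A-y_Bx_A$, and $\mathbf a,\mathbf b,\mathbf c$ are the corresponding diagonal $|\mathring{\mathcal E}|\times|\mathring{\mathcal E}|$ matrices. $\mathbf G$ is the $(3|\mathcal T|+|\mathring{\mathcal E}|)\times 3|\mathring{\mathcal E}|$ matrix $$\mathbf G=\begin{pmatrix}\boldsymbol{\Delta}&0&0\\0&\boldsymbol{\Delta}&0\\0&0&\boldsymbol{\Delta}\\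 \mathbf c&\mathbf a&\mathbf b\end{pmatrix}.$$ *)

theory Defs
  imports "HOL-Analysis.Analysis" "HOL-Library.Function_Algebras"
begin

type_synonym pt = "real \<times> real"

text \<open>Bounded connected open polygonal domain (possibly with holes): its boundary is a
  finite union of pairwise disjoint closed Jordan curves (polygonality of the boundary
  is forced by the triangulation below).\<close>
definition polygonal_domain :: "pt set \<Rightarrow> bool" where
  "polygonal_domain \<Omega> \<longleftrightarrow> open \<Omega> \<and> bounded \<Omega> \<and> connected \<Omega> \<and> \<Omega> \<noteq> {} \<and>
     (\<exists>C. finite C \<and> pairwise disjnt C \<and> frontier \<Omega> = \<Union>C \<and>
          (\<forall>c\<in>C. c homeomorphic sphere (0::pt) 1))"

text \<open>A triangle is represented by its set of three (affinely independent) vertices;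
  the geometric triangle is its convex hull.  Conformity: two triangles meet in a common
  face (empty, a common vertex or a common edge).\<close>
definition conforming_triangulation :: "pt set \<Rightarrow> pt set set \<Rightarrow> bool" where
  "conforming_triangulation \<Omega> \<T> \<longleftrightarrow> finite \<T> \<and>
     (\<forall>T\<in>\<T>. card T = 3 \<and> \<not> affine_dependent T) \<and>
     (\<forall>T\<in>\<T>. \<forall>T'\<in>\<T>. convex hull T \<inter> convex hull T' = convex hull (T \<inter> T')) \<and>
     \<Union>((\<lambda>T. convex hull T) ` \<T>) = closure \<Omega>"

definition mesh_vertices :: "pt set set \<Rightarrow> pt set" where
  "mesh_vertices \<T> = \<Union>\<T>"

definition mesh_edges :: "pt set set \<Rightarrow> pt set set" where
  "mesh_edges \<T> = {e. \<exists>T\<in>\<T>. e \<subseteq> T \<and> card e = 2}"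

definition internal_edges :: "pt set set \<Rightarrow> pt set set" where
  "internal_edges \<T> = {e \<in> mesh_edges \<T>. card {T\<in>\<T>. e \<subseteq> T} = 2}"

definition internal_vertices :: "pt set \<Rightarrow> pt set set \<Rightarrow> pt set" where
  "internal_vertices \<Omega> \<T> = mesh_vertices \<T> \<inter> \<Omega>"

definition boundary_vertices :: "pt set \<Rightarrow> pt set set \<Rightarrow> pt set" where
  "boundary_vertices \<Omega> \<T> = mesh_vertices \<T> \<inter> frontier \<Omega>"

definition at_most_one_boundary_edge :: "pt set \<Rightarrow> pt set set \<Rightarrow> bool" where
  "at_most_one_boundary_edge \<Omega> \<T> \<longleftrightarrow>
     (\<forall>T\<in>\<T>. card {e. e \<subseteq> T \<and> card e = 2 \<and> convex hull e \<subseteq> frontier \<Omega>} \<le> 1)"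

text \<open>An orientation of the edges: edge e is oriented from fst (ori e) to snd (ori e).\<close>
definition edge_orientation :: "pt set set \<Rightarrow> (pt set \<Rightarrow> pt \<times> pt) \<Rightarrow> bool" where
  "edge_orientation \<T> ori \<longleftrightarrow> (\<forall>e\<in>mesh_edges \<T>. {fst (ori e), snd (ori e)} = e)"

text \<open>orient2d A B C > 0 iff C lies to the left of the directed line A B.\<close>
definition orient2d :: "pt \<Rightarrow> pt \<Rightarrow> pt \<Rightarrow> real" where
  "orient2d A B C = (fst B - fst A) * (snd C - snd A) - (snd B - snd A) * (fst C - fst A)"

text \<open>delta_T^Gamma: all triangles have the same rotation sense, counterclockwise for
  sigma = 1 and clockwise for sigma = -1.  The oriented edge A B agrees with the
  counterclockwise orientation of the boundary of T iff the third vertex lies to its left.\<close>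
definition delta :: "real \<Rightarrow> (pt set \<Rightarrow> pt \<times> pt) \<Rightarrow> pt set \<Rightarrow> pt set \<Rightarrow> real" where
  "delta \<sigma> ori T e = \<sigma> * sgn (orient2d (fst (ori e)) (snd (ori e)) (the_elem (T - e)))"

definition Delta_mat :: "real \<Rightarrow> (pt set \<Rightarrow> pt \<times> pt) \<Rightarrow> pt set \<Rightarrow> pt set \<Rightarrow> real" where
  "Delta_mat \<sigma> ori T e = (if e \<subseteq> T then delta \<sigma> ori T e else 0)"

definition coef_a :: "(pt set \<Rightarrow> pt \<times> pt) \<Rightarrow> pt set \<Rightarrow> real" where
  "coef_a ori e = snd (snd (ori e)) - snd (fst (ori e))"
definition coef_b :: "(pt set \<Rightarrow> pt \<times> pt) \<Rightarrow> pt set \<Rightarrow> real" where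
  "coef_b ori e = fst (fst (ori e)) - fst (snd (ori e))"
definition coef_c :: "(pt set \<Rightarrow> pt \<times> pt) \<Rightarrow> pt set \<Rightarrow> real" where
  "coef_c ori e = fst (snd (ori e)) * snd (fst (ori e)) - snd (snd (ori e)) * fst (fst (ori e))"

text \<open>Row indices of G: Inl (T,k) is triangle T in block k (k = 0,1,2);
  Inr e is internal edge e in the last block.
  Column indices of G: (e,k) is internal edge e in block k (k = 0,1,2).\<close>
type_synonym row_idx = "(pt set \<times> nat) + pt set"
type_synonym col_idx = "pt set \<times> nat"

definition G_rows :: "pt set set \<Rightarrow> row_idx set" where
  "G_rows \<T> = Inl ` (\<T> \<times> {0,1,2}) \<union> Inr ` internal_edges \<T>"

definition G_cols :: "pt set set \<Rightarrow> col_idx set" where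
  "G_cols \<T> = internal_edges \<T> \<times> {0,1,2}"

definition G_mat :: "real \<Rightarrow> (pt set \<Rightarrow> pt \<times> pt) \<Rightarrow> row_idx \<Rightarrow> col_idx \<Rightarrow> real" where
  "G_mat \<sigma> ori i j = (case i of
      Inl (T, k) \<Rightarrow> (if k = snd j then Delta_mat \<sigma> ori T (fst j) else 0)
    | Inr e' \<Rightarrow> (if e' = fst j then
          (if snd j = 0 then coef_c ori e' else if snd j = 1 then coef_a ori e' else coef_b ori e')
        else 0))"

text \<open>ker(G^T), as a subspace of the real vector space of functions on the row
  indices vanishing outside the row index set.\<close>
definition left_kernel_G :: "pt set set \<Rightarrow> real \<Rightarrow> (pt set \<Rightarrow> pt \<times> pt) \<Rightarrow> (row_idx \<Rightarrow> real) set" where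
  "left_kernel_G \<T> \<sigma> ori = {v. (\<forall>i. i \<notin> G_rows \<T> \<longrightarrow> v i = 0) \<and>
       (\<forall>j\<in>G_cols \<T>. (\<Sum>i\<in>G_rows \<T>. G_mat \<sigma> ori i j * v i) = 0)}"

definition fscale :: "real \<Rightarrow> (row_idx \<Rightarrow> real) \<Rightarrow> (row_idx \<Rightarrow> real)" where
  "fscale r f = (\<lambda>i. r * f i)"

end

theory Submission
  imports Defs "HOL-Complex_Analysis.Contour_Integration"
begin

text \<open>
  A vector of \<open>ker G\<^sup>T\<close> attaches to every triangle \<open>T\<close> an affine function
  \<open>f\<^sub>T(x, y) = \<alpha>\<^sub>T + \<beta>\<^sub>T x + \<gamma>\<^sub>T y\<close> and to every internal edge a multiplier \<open>\<mu>\<^sub>e\<close>.  Because the two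
  triangles at an internal edge induce opposite signs \<open>\<delta>\<close>, the column equations of \<open>e\<close> say that the
  jump of \<open>f\<close> across \<open>e\<close> is \<open>\<mu>\<^sub>e\<close> times the line equation \<open>c + a x + b y\<close> of \<open>e\<close>; so the
  pieces agree at the endpoints of every internal edge, and conversely pieces that agree there
  determine the multipliers uniquely.  Provided the triangles around each vertex form a single chain
  under edge adjacency, the kernel is therefore the space of continuous piecewise affine functions,
  with the hat functions of the vertices as a basis.

  The chain property is the geometric heart: a proper part of the star of \<open>p\<close> that is closed
  under edge adjacency has at least two free edges (a punctured disc is connected and such edges
  come in pairs), so at an interior vertex it cannot exist, and at a boundary vertex two disjoint
  parts would give three disjoint segments of the frontier ending at \<open>p\<close>, which a Jordan curve
  does not admit.
\<close>

section \<open>Orientation determinant and barycentric coordinates\<close>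

lemma orient2d_rotate: "orient2d q s p = orient2d p q s" "orient2d s p q = orient2d p q s"
  by (simp_all add: orient2d_def algebra_simps)

lemma orient2d_swap: "orient2d p s q = - orient2d p q s"
  by (simp add: orient2d_def algebra_simps)

lemma orient2d_degenerate [simp]: "orient2d p q p = 0" "orient2d p q q = 0"
  by (simp_all add: orient2d_def)

lemma continuous_on_orient2d [continuous_intros]: "continuous_on S (orient2d a b)"
  unfolding orient2d_def by (intro continuous_intros)

lemma orient2d_affine_combination:
  assumes "u + v + w = 1"
  shows "orient2d a b (u *\<^sub>R p + v *\<^sub>R q + w *\<^sub>R s)
       = u * orient2d a b p + v * orient2d a b q + w * orient2d a b s"
proof -
  have w: "w = 1 - u - v" using assms by simp
  show ?thesis unfolding w by (simp add: orient2d_def algebra_simps)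
qed

lemma orient2d_segment_combination:
  "orient2d a b ((1 - u) *\<^sub>R p + u *\<^sub>R q) = (1 - u) * orient2d a b p + u * orient2d a b q"
  using orient2d_affine_combination[of "1 - u" u 0 a b p q q] by simp

lemma orient2d_barycentric_sum: "orient2d q s x + orient2d s p x + orient2d p q x = orient2d p q s"
  by (simp add: orient2d_def algebra_simps)

lemma orient2d_barycentric_combination:
  "orient2d q s x *\<^sub>R p + orient2d s p x *\<^sub>R q + orient2d p q x *\<^sub>R s = orient2d p q s *\<^sub>R x"
  by (cases p; cases q; cases s; cases x) (simp add: orient2d_def algebra_simps)

lemma orient2d_eq_0_imp_in_affine_hull:
  assumes "p \<noteq> q" "orient2d p q s = 0"
  shows "s \<in> affine hull {p, q}"
proof -
  obtain d1 d2 where d: "q - p = (d1, d2)" by fastforce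
  obtain e1 e2 where e: "s - p = (e1, e2)" by fastforce
  have N: "d1 * d1 + d2 * d2 \<noteq> 0" using assms(1) d
    by (auto simp: sum_squares_eq_zero_iff zero_prod_def[symmetric])
  have cross: "d1 * e2 = d2 * e1" using assms(2) d e by (simp add: orient2d_def prod_eq_iff)
  define t where "t = (e1 * d1 + e2 * d2) / (d1 * d1 + d2 * d2)"
  have "t * d1 = e1" "t * d2 = e2"
    using N cross unfolding t_def by (simp_all add: field_simps)
  then have "s - p = t *\<^sub>R (q - p)" using d e by simp
  then have "s = (1 - t) *\<^sub>R p + t *\<^sub>R q" by (simp add: algebra_simps)
  then show ?thesis unfolding affine_hull_2 by force
qed

lemma orient2d_nonzero_if_affine_independent:
  assumes "p \<noteq> q" "p \<noteq> s" "q \<noteq> s" "\<not> affine_dependent {p, q, s}"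
  shows "orient2d p q s \<noteq> 0"
proof
  assume "orient2d p q s = 0"
  then have "s \<in> affine hull ({p, q, s} - {s})"
    using orient2d_eq_0_imp_in_affine_hull assms(1-3) by (simp add: insert_Diff_if)
  then show False using assms(4) unfolding affine_dependent_def by blast
qed

lemma orient2d_eq_0_if_in_segment: "y \<in> convex hull {p, q} \<Longrightarrow> orient2d p q y = 0"
  unfolding convex_hull_2 by (auto simp: orient2d_affine_combination[where w = 0, simplified])

lemma barycentric_by_orient2d:
  assumes D: "orient2d p q s \<noteq> 0"
  shows "orient2d q s x / orient2d p q s + orient2d s p x / orient2d p q s + orient2d p q x / orient2d p q s = 1"
    and "x = (orient2d q s x / orient2d p q s) *\<^sub>R p + (orient2d s p x / orient2d p q s) *\<^sub>R q
           + (orient2d p q x / orient2d p q s) *\<^sub>R s"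
proof -
  show "orient2d q s x / orient2d p q s + orient2d s p x / orient2d p q s + orient2d p q x / orient2d p q s = 1"
  proof -
    have "orient2d q s x / orient2d p q s + orient2d s p x / orient2d p q s + orient2d p q x / orient2d p q s
       = (orient2d q s x + orient2d s p x + orient2d p q x) / orient2d p q s"
      by (simp add: add_divide_distrib)
    then show ?thesis using D by (simp add: orient2d_barycentric_sum)
  qed
  have "x = (1 / orient2d p q s) *\<^sub>R (orient2d p q s *\<^sub>R x)" using D by simp
  also have "\<dots> = (orient2d q s x / orient2d p q s) *\<^sub>R p + (orient2d s p x / orient2d p q s) *\<^sub>R q
           + (orient2d p q x / orient2d p q s) *\<^sub>R s"
    by (subst orient2d_barycentric_combination[of q s x p, symmetric]) (simp add: scaleR_add_right)
  finally show "x = (orient2d q s x / orient2d p q s) *\<^sub>R p + (orient2d s p x / orient2d p q s) *\<^sub>R q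
           + (orient2d p q x / orient2d p q s) *\<^sub>R s" .
qed

lemma convex_hull_3_iff_orient2d:
  assumes D: "orient2d p q s \<noteq> 0"
  shows "x \<in> convex hull {p, q, s} \<longleftrightarrow>
     0 \<le> orient2d q s x / orient2d p q s \<and> 0 \<le> orient2d s p x / orient2d p q s \<and> 0 \<le> orient2d p q x / orient2d p q s"
proof
  assume "x \<in> convex hull {p, q, s}"
  then obtain u v w where uvw: "0 \<le> u" "0 \<le> v" "0 \<le> w" "u + v + w = 1"
    and x: "x = u *\<^sub>R p + v *\<^sub>R q + w *\<^sub>R s"
    unfolding convex_hull_3 by blast
  have "orient2d q s x = u * orient2d p q s" "orient2d s p x = v * orient2d p q s"
    "orient2d p q x = w * orient2d p q s"
    unfolding x orient2d_affine_combination[OF uvw(4)] by (simp_all add: orient2d_rotate)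
  then show "0 \<le> orient2d q s x / orient2d p q s \<and> 0 \<le> orient2d s p x / orient2d p q s \<and> 0 \<le> orient2d p q x / orient2d p q s"
    using D uvw by simp
next
  assume "0 \<le> orient2d q s x / orient2d p q s \<and> 0 \<le> orient2d s p x / orient2d p q s \<and> 0 \<le> orient2d p q x / orient2d p q s"
  moreover note barycentric_by_orient2d[OF D, of x]
  ultimately show "x \<in> convex hull {p, q, s}"
    unfolding convex_hull_3 by (smt (verit) mem_Collect_eq)
qed

lemma interior_triangle_if_orient2d:
  assumes D: "orient2d p q s \<noteq> 0"
    and "0 < orient2d q s x / orient2d p q s" "0 < orient2d s p x / orient2d p q s" "0 < orient2d p q x / orient2d p q s"
  shows "x \<in> interior (convex hull {p, q, s})"
proof (rule interiorI)
  let ?V = "{y. 0 < orient2d q s y / orient2d p q s} \<inter> {y. 0 < orient2d s p y / orient2d p q s}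
     \<inter> {y. 0 < orient2d p q y / orient2d p q s}"
  show "open ?V" by (intro open_Int open_Collect_less continuous_intros) (auto simp: D)
  show "x \<in> ?V" using assms by simp
  show "?V \<subseteq> convex hull {p, q, s}" by (auto simp: convex_hull_3_iff_orient2d[OF D])
qed

lemma small_step_in_open:
  fixes m d :: "'a::real_normed_vector"
  assumes "open V" "m \<in> V"
  obtains \<epsilon> where "0 < \<epsilon>" "\<epsilon> < 1" "m + \<epsilon> *\<^sub>R d \<in> V"
proof -
  have "((\<lambda>\<epsilon>::real. m + \<epsilon> *\<^sub>R d) \<longlongrightarrow> m) (at_right 0)"
    by (auto intro!: tendsto_eq_intros)
  then have "\<forall>\<^sub>F \<epsilon> in at_right 0. m + \<epsilon> *\<^sub>R d \<in> V"
    using assms by (rule topological_tendstoD)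
  moreover have "\<forall>\<^sub>F \<epsilon> in at_right (0::real). 0 < \<epsilon> \<and> \<epsilon> < 1"
    unfolding eventually_at_right_field by (auto intro: exI[of _ 1])
  ultimately have "\<forall>\<^sub>F \<epsilon> in at_right (0::real). 0 < \<epsilon> \<and> \<epsilon> < 1 \<and> m + \<epsilon> *\<^sub>R d \<in> V"
    by eventually_elim auto
  then show ?thesis
    using that eventually_frequently[OF trivial_limit_at_right_real] frequently_ex by blast
qed

section \<open>Arms of a Jordan curve\<close>

lemma frequently_at_right_realE:
  fixes a b :: real
  assumes "\<exists>\<^sub>F t in at_right a. P t" "a < b"
  obtains t where "a < t" "t < b" "P t"
  using assms unfolding frequently_def eventually_at_right_field by (meson not_le)

lemma frequently_at_left_realE:
  fixes a b :: real
  assumes "\<exists>\<^sub>F t in at_left b. P t" "a < b"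
  obtains t where "a < t" "t < b" "P t"
  using assms unfolding frequently_def eventually_at_left_field by (meson not_le)

lemma simple_loop_through:
  fixes c :: "pt set"
  assumes "c homeomorphic sphere (0::pt) 1" "p \<in> c"
  obtains g where "simple_path g" "pathfinish g = pathstart g" "pathstart g = p" "path_image g = c"
proof -
  have "sphere (0::complex) 1 homeomorphic sphere (0::pt) 1"
    by (rule homeomorphic_spheres_gen) auto
  then have "sphere (0::complex) 1 homeomorphic c"
    using assms(1) homeomorphic_sym homeomorphic_trans by blast
  then obtain h k where hk: "homeomorphism (sphere (0::complex) 1) c h k"
    unfolding homeomorphic_def by blast
  define g0 where "g0 = h \<circ> circlepath 0 1"
  have "simple_path g0" unfolding g0_def
  proof (rule simple_path_continuous_image)
    show "simple_path (circlepath (0::complex) 1)" by (simp add: simple_path_circlepath)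
    show "continuous_on (path_image (circlepath 0 1)) h" "inj_on h (path_image (circlepath 0 1))"
      using hk by (auto simp: homeomorphism_def intro: inj_on_inverseI)
  qed
  moreover have "pathfinish g0 = pathstart g0"
    unfolding g0_def pathfinish_compose pathstart_compose by simp
  moreover have "path_image g0 = c"
    using hk unfolding g0_def path_image_compose homeomorphism_def by simp
  moreover obtain a where "a \<in> {0..1}" "g0 a = p"
    using assms(2) calculation(3) unfolding path_image_def by auto
  ultimately show ?thesis
    using that[of "shiftpath a g0"]
    by (auto simp: simple_path_shiftpath pathstart_shiftpath pathfinish_shiftpath path_image_shiftpath)
qed

lemma simple_path_interior_injective:
  assumes "simple_path g" "x \<in> {0..1}" "y \<in> {0..1}" "g x = g y" "0 < x" "x < 1"
  shows "x = y"
  using assms unfolding simple_path_def loop_free_def by fastforce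

lemma connected_simple_loop_preimage:
  fixes g :: "real \<Rightarrow> 'a::t2_space"
  assumes g: "simple_path g" "pathfinish g = pathstart g"
    and K: "compact K" "connected K" "K \<subseteq> path_image g - {pathstart g}"
  shows "connected ({0..1} \<inter> g -` K)"
proof -
  define D where "D = {0..1} \<inter> g -` K"
  have cont: "continuous_on {0..1} g" using g(1) unfolding simple_path_def path_def by blast
  have "closed D" unfolding D_def
    using continuous_closed_preimage[OF cont] compact_imp_closed[OF K(1)] by simp
  then have "compact D" unfolding D_def by (simp add: compact_eq_bounded_closed bounded_Int)
  have ends: "0 < t \<and> t < 1" if "t \<in> D" for t
  proof -
    have "g t \<noteq> g 0" "g t \<noteq> g 1"
      using that g(2) K(3) unfolding D_def pathstart_def pathfinish_def by auto
    then show ?thesis using that unfolding D_def by (auto simp: less_le)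
  qed
  have inj: "inj_on g D"
  proof (rule inj_onI)
    fix x y assume "x \<in> D" "y \<in> D" "g x = g y"
    then show "x = y" using ends[OF \<open>x \<in> D\<close>] simple_path_interior_injective[OF g(1)] unfolding D_def by blast
  qed
  have gD: "g ` D = K" using K(3) unfolding D_def path_image_def by auto
  have "continuous_on D g" using cont unfolding D_def by (rule continuous_on_subset) auto
  then have "continuous_on (g ` D) (inv_into D g)"
    by (rule continuous_on_inv[OF _ \<open>compact D\<close>]) (simp add: inj)
  then have "connected (inv_into D g ` g ` D)" using K(2) gD by (simp add: connected_continuous_image)
  moreover have "inv_into D g ` g ` D = D" by (rule inv_into_image_cancel[OF inj order_refl])
  ultimately have "connected D" by simp
  then show ?thesis unfolding D_def .
qed

lemma simple_loop_convex_between: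
  fixes g :: "real \<Rightarrow> 'a::real_normed_vector"
  assumes g: "simple_path g" "pathfinish g = pathstart g"
    and L: "L \<subseteq> path_image g - {pathstart g}" "convex L"
    and t: "0 \<le> t1" "t1 \<le> s" "s \<le> t2" "t2 \<le> 1" "g t1 \<in> L" "g t2 \<in> L"
  shows "g s \<in> L"
proof -
  define K where "K = closed_segment (g t1) (g t2)"
  have KL: "K \<subseteq> L" unfolding K_def using L(2) t(5,6) by (simp add: closed_segment_subset)
  have "connected ({0..1} \<inter> g -` K)"
    by (rule connected_simple_loop_preimage[OF g]) (use KL L(1) in \<open>auto simp: K_def\<close>)
  moreover have "t1 \<in> {0..1} \<inter> g -` K" "t2 \<in> {0..1} \<inter> g -` K" using t unfolding K_def by auto
  ultimately have "s \<in> {0..1} \<inter> g -` K" using t(2,3) by (meson atLeastAtMost_iff connected_contains_Icc subsetD)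
  then show ?thesis using KL by auto
qed

lemma simple_loop_arm_at_ends:
  fixes g :: "real \<Rightarrow> 'a::t2_space"
  assumes g: "simple_path g" "pathfinish g = pathstart g"
    and L: "L \<subseteq> path_image g - {pathstart g}" "pathstart g \<in> closure L"
  shows "(\<exists>\<^sub>F t in at_right 0. g t \<in> L) \<or> (\<exists>\<^sub>F t in at_left 1. g t \<in> L)"
proof (rule ccontr)
  assume "\<not> ?thesis"
  then obtain e1 e2 where e: "0 < e1" "e2 < 1"
    and near0: "\<And>t. 0 < t \<Longrightarrow> t < e1 \<Longrightarrow> g t \<notin> L"
    and near1: "\<And>t. e2 < t \<Longrightarrow> t < 1 \<Longrightarrow> g t \<notin> L"
    unfolding frequently_def eventually_at_right_field eventually_at_left_field by auto
  have ends: "g 0 = pathstart g" "g 1 = pathstart g"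
    using g(2) unfolding pathstart_def pathfinish_def by auto
  have cont: "continuous_on {0..1} g" using g(1) unfolding simple_path_def path_def by blast
  have "L \<subseteq> g ` {e1..e2}"
  proof
    fix x assume "x \<in> L"
    then have "x \<noteq> pathstart g" using L(1) by blast
    obtain t where t: "t \<in> {0..1}" "x = g t" using \<open>x \<in> L\<close> L(1) unfolding path_image_def by blast
    then have "0 < t" "t < 1" using ends \<open>x \<noteq> pathstart g\<close> by (auto simp: less_le)
    then have "t \<in> {e1..e2}" using near0 near1 t \<open>x \<in> L\<close> by (meson atLeastAtMost_iff not_less)
    then show "x \<in> g ` {e1..e2}" using t(2) by blast
  qed
  moreover have "compact (g ` {e1..e2})"
    by (intro compact_continuous_image continuous_on_subset[OF cont]) (use e in auto)
  ultimately have "closure L \<subseteq> g ` {e1..e2}" by (simp add: closure_minimal compact_imp_closed)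
  then obtain t where "t \<in> {e1..e2}" "g t = g 0" using L(2) ends by auto
  then show False using simple_path_interior_injective[OF g(1), of t 0] e by auto
qed

lemma simple_loop_arms_meet:
  fixes g :: "real \<Rightarrow> 'a::real_normed_vector"
  assumes g: "simple_path g" "pathfinish g = pathstart g"
    and L1: "L1 \<subseteq> path_image g - {pathstart g}" "convex L1" and L2: "L2 \<subseteq> path_image g - {pathstart g}"
    and ends: "(\<exists>\<^sub>F t in at_right 0. g t \<in> L1) \<and> (\<exists>\<^sub>F t in at_right 0. g t \<in> L2)
      \<or> (\<exists>\<^sub>F t in at_left 1. g t \<in> L1) \<and> (\<exists>\<^sub>F t in at_left 1. g t \<in> L2)"
  shows "L1 \<inter> L2 \<noteq> {}"
  using ends
proof
  assume a: "(\<exists>\<^sub>F t in at_right 0. g t \<in> L1) \<and> (\<exists>\<^sub>F t in at_right 0. g t \<in> L2)"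
  obtain t1 where t1: "0 < t1" "t1 < 1" "g t1 \<in> L1" by (rule frequently_at_right_realE[OF conjunct1[OF a] zero_less_one])
  obtain t2 where t2: "0 < t2" "t2 < t1" "g t2 \<in> L2" by (rule frequently_at_right_realE[OF conjunct2[OF a] t1(1)])
  obtain t3 where t3: "0 < t3" "t3 < t2" "g t3 \<in> L1" by (rule frequently_at_right_realE[OF conjunct1[OF a] t2(1)])
  have "g t2 \<in> L1" by (rule simple_loop_convex_between[OF g L1, of t3 t2 t1]) (use t1 t2 t3 in auto)
  then show ?thesis using t2 by blast
next
  assume a: "(\<exists>\<^sub>F t in at_left 1. g t \<in> L1) \<and> (\<exists>\<^sub>F t in at_left 1. g t \<in> L2)"
  obtain t1 where t1: "0 < t1" "t1 < 1" "g t1 \<in> L1" by (rule frequently_at_left_realE[OF conjunct1[OF a] zero_less_one])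
  obtain t2 where t2: "t1 < t2" "t2 < 1" "g t2 \<in> L2" by (rule frequently_at_left_realE[OF conjunct2[OF a] t1(2)])
  obtain t3 where t3: "t2 < t3" "t3 < 1" "g t3 \<in> L1" by (rule frequently_at_left_realE[OF conjunct1[OF a] t2(2)])
  have "g t2 \<in> L1" by (rule simple_loop_convex_between[OF g L1, of t1 t2 t3]) (use t1 t2 t3 in auto)
  then show ?thesis using t2 by blast
qed

lemma Jordan_curve_no_three_arms:
  fixes c :: "pt set"
  assumes "c homeomorphic sphere (0::pt) 1" "p \<in> c"
    and L1: "L1 \<subseteq> c - {p}" "convex L1" "p \<in> closure L1"
    and L2: "L2 \<subseteq> c - {p}" "convex L2" "p \<in> closure L2"
    and L3: "L3 \<subseteq> c - {p}" "convex L3" "p \<in> closure L3"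
    and disj: "L1 \<inter> L2 = {}" "L1 \<inter> L3 = {}" "L2 \<inter> L3 = {}"
  shows False
proof -
  obtain g where g: "simple_path g" "pathfinish g = pathstart g" and gp: "pathstart g = p" "path_image g = c"
    using simple_loop_through[OF assms(1,2)] by blast
  note arm = simple_loop_arm_at_ends[OF g, unfolded gp]
  note meet = simple_loop_arms_meet[OF g, unfolded gp]
  show False
    using arm[OF L1(1,3)] arm[OF L2(1,3)] arm[OF L3(1,3)]
      meet[OF L1(1,2) L2(1)] meet[OF L1(1,2) L3(1)] meet[OF L2(1,2) L3(1)] disj
    by argo
qed

lemma connected_subset_of_disjoint_closed:
  assumes "finite Cs" "pairwise disjnt Cs" "\<And>c. c \<in> Cs \<Longrightarrow> closed c"
    and S: "connected S" "S \<subseteq> \<Union>Cs" and c: "c \<in> Cs" "x \<in> S" "x \<in> c"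
  shows "S \<subseteq> c"
proof -
  have "closed (\<Union>(Cs - {c}))" using assms(1,3) by (intro closed_Union) auto
  moreover have "S \<inter> c = S \<inter> - \<Union>(Cs - {c})"
  proof
    have "y \<notin> c'" if "y \<in> c" "c' \<in> Cs - {c}" for y c'
      using assms(2) that c(1) unfolding pairwise_def disjnt_def by blast
    then show "S \<inter> c \<subseteq> S \<inter> - \<Union>(Cs - {c})" by blast
    show "S \<inter> - \<Union>(Cs - {c}) \<subseteq> S \<inter> c" using S(2) by blast
  qed
  ultimately have "openin (top_of_set S) (S \<inter> c)" by (auto intro: openin_open_Int)
  moreover have "closedin (top_of_set S) (S \<inter> c)" using assms(3)[OF c(1)] by (rule closedin_closed_Int)
  ultimately have "S \<inter> c = {} \<or> S \<inter> c = S" using S(1) unfolding connected_clopen by blast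
  then show ?thesis using c by blast
qed

section \<open>Triangulations\<close>

locale triangulation =
  fixes \<Omega> :: "pt set" and \<T> :: "pt set set"
  assumes domain: "polygonal_domain \<Omega>" and conforming: "conforming_triangulation \<Omega> \<T>"
begin

lemma finite_triangles: "finite \<T>"
  using conforming unfolding conforming_triangulation_def by blast

lemma card_triangle: "T \<in> \<T> \<Longrightarrow> card T = 3"
  using conforming unfolding conforming_triangulation_def by blast

lemma finite_triangle: "T \<in> \<T> \<Longrightarrow> finite T"
  using card_triangle by (metis card.infinite zero_neq_numeral)

lemma triangle_affine_independent: "T \<in> \<T> \<Longrightarrow> \<not> affine_dependent T"
  using conforming unfolding conforming_triangulation_def by blast

lemma convex_hull_triangles_Int:
  "T \<in> \<T> \<Longrightarrow> T' \<in> \<T> \<Longrightarrow> convex hull T \<inter> convex hull T' = convex hull (T \<inter> T')"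
  using conforming unfolding conforming_triangulation_def by blast

lemma Union_convex_hull_triangles: "\<Union>((\<lambda>T. convex hull T) ` \<T>) = closure \<Omega>"
  using conforming unfolding conforming_triangulation_def by blast

lemma open_domain: "open \<Omega>"
  using domain unfolding polygonal_domain_def by blast

lemma frontier_domain: "frontier \<Omega> = closure \<Omega> - \<Omega>"
  unfolding frontier_def using open_domain by (simp add: interior_open)

lemma finite_mesh_vertices: "finite (mesh_vertices \<T>)"
  unfolding mesh_vertices_def using finite_triangles finite_triangle by blast

lemma mesh_vertices_subset_closure: "mesh_vertices \<T> \<subseteq> closure \<Omega>"
proof
  fix x assume "x \<in> mesh_vertices \<T>"
  then obtain T where "T \<in> \<T>" "x \<in> T" unfolding mesh_vertices_def by blast
  then show "x \<in> closure \<Omega>" using Union_convex_hull_triangles hull_inc[of x T] by blast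
qed

lemma card_internal_boundary_vertices:
  "card (internal_vertices \<Omega> \<T>) + card (boundary_vertices \<Omega> \<T>) = card (mesh_vertices \<T>)"
proof -
  have "internal_vertices \<Omega> \<T> \<union> boundary_vertices \<Omega> \<T> = mesh_vertices \<T>"
    unfolding internal_vertices_def boundary_vertices_def frontier_domain
    using mesh_vertices_subset_closure by blast
  moreover have "internal_vertices \<Omega> \<T> \<inter> boundary_vertices \<Omega> \<T> = {}"
    unfolding internal_vertices_def boundary_vertices_def frontier_domain by blast
  ultimately show ?thesis
    using card_Un_disjoint finite_mesh_vertices
    unfolding internal_vertices_def boundary_vertices_def by (metis finite_Int)
qed

lemma closed_Union_convex_hull:
  "X \<subseteq> \<T> \<Longrightarrow> closed (\<Union>((\<lambda>T. convex hull T) ` X))"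
  using finite_triangles finite_triangle
  by (intro closed_Union) (auto intro!: compact_imp_closed finite_imp_compact_convex_hull intro: finite_subset)

lemma orient2d_triangle_nonzero:
  assumes "{p, q, s} \<in> \<T>" "p \<noteq> q" "p \<noteq> s" "q \<noteq> s"
  shows "orient2d p q s \<noteq> 0"
  by (rule orient2d_nonzero_if_affine_independent[OF assms(2-4) triangle_affine_independent[OF assms(1)]])

lemma triangle_at_vertex:
  assumes "T \<in> \<T>" "p \<in> T"
  obtains q s where "T = {p, q, s}" "p \<noteq> q" "p \<noteq> s" "q \<noteq> s" "orient2d p q s \<noteq> 0"
proof -
  obtain a b c where abc: "T = {a, b, c}" "a \<noteq> b" "a \<noteq> c" "b \<noteq> c"
    using card_triangle[OF assms(1)] card_3_iff by metis
  have "\<exists>q s. T = {p, q, s} \<and> p \<noteq> q \<and> p \<noteq> s \<and> q \<noteq> s"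
  proof -
    consider "p = a" | "p = b" | "p = c" using assms(2) abc(1) by blast
    then show ?thesis
    proof cases
      case 1 then show ?thesis using abc by blast
    next
      case 2 then show ?thesis using abc by (intro exI[of _ a] exI[of _ c]) auto
    next
      case 3 then show ?thesis using abc by (intro exI[of _ a] exI[of _ b]) auto
    qed
  qed
  then obtain q s where qs: "T = {p, q, s}" "p \<noteq> q" "p \<noteq> s" "q \<noteq> s" by blast
  moreover have "orient2d p q s \<noteq> 0"
    using orient2d_triangle_nonzero[of p q s] assms(1) qs by simp
  ultimately show ?thesis by (rule that)
qed

lemma triangle_at_edge:
  assumes "T \<in> \<T>" "p \<in> T" "q \<in> T" "p \<noteq> q"
  obtains s where "T = {p, q, s}" "s \<noteq> p" "s \<noteq> q" "orient2d p q s \<noteq> 0"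
proof -
  obtain a b where ab: "T = {p, a, b}" "p \<noteq> a" "p \<noteq> b" "a \<noteq> b"
    using triangle_at_vertex[OF assms(1,2)] by blast
  have "q = a \<or> q = b" using assms(3,4) ab(1) by blast
  then obtain s where s: "T = {p, q, s}" "s \<noteq> p" "s \<noteq> q"
  proof
    assume "q = a" then show thesis using that[of b] ab by blast
  next
    assume "q = b" then show thesis using that[of a] ab by (simp add: insert_commute)
  qed
  moreover have "orient2d p q s \<noteq> 0"
    using orient2d_triangle_nonzero[of p q s] assms(1,4) s by simp
  ultimately show ?thesis by (rule that)
qed

lemma vertex_in_convex_hull_triangle:
  assumes "T \<in> \<T>" "T' \<in> \<T>" "x \<in> T'" "x \<in> convex hull T"
  shows "x \<in> T"
proof (rule ccontr)
  assume "x \<notin> T"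
  have "x \<in> convex hull (T \<inter> T')"
    using convex_hull_triangles_Int[OF assms(1,2)] assms(3,4) hull_inc[of x T'] by blast
  then have "x \<in> convex hull (T' - {x})" using \<open>x \<notin> T\<close> hull_mono[of "T \<inter> T'" "T' - {x}"] by blast
  then have "affine_dependent T'"
    unfolding affine_dependent_def using assms(3) convex_hull_subset_affine_hull by blast
  then show False using triangle_affine_independent[OF assms(2)] by blast
qed

text \<open>Otherwise a point of \<open>T\<close> close to the midpoint of \<open>pq\<close> would also lie in \<open>T'\<close>, hence on the
  common edge.\<close>

lemma orient2d_opposite_sides:
  assumes T: "{p, q, s} \<in> \<T>" and T': "{p, q, s'} \<in> \<T>"
    and d: "p \<noteq> q" "p \<noteq> s" "q \<noteq> s" "p \<noteq> s'" "q \<noteq> s'" "s \<noteq> s'"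
  shows "orient2d p q s * orient2d p q s' < 0"
proof (rule ccontr)
  assume "\<not> orient2d p q s * orient2d p q s' < 0"
  moreover have o1: "orient2d p q s \<noteq> 0" and o2: "orient2d p q s' \<noteq> 0"
    using orient2d_triangle_nonzero T T' d by blast+
  ultimately have same_side: "0 < orient2d p q s / orient2d p q s'"
    by (simp add: zero_less_divide_iff mult_less_0_iff) linarith
  define m where "m = (1/2) *\<^sub>R p + (1/2) *\<^sub>R q"
  define V where "V = {y. 0 < orient2d q s' y / orient2d p q s'} \<inter> {y. 0 < orient2d s' p y / orient2d p q s'}"
  have "open V" unfolding V_def by (intro open_Int open_Collect_less continuous_intros) (auto simp: o2)
  moreover have "orient2d q s' m = orient2d p q s' / 2" "orient2d s' p m = orient2d p q s' / 2"
    unfolding m_def by (simp_all add: orient2d_def field_simps)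
  then have "m \<in> V" unfolding V_def Int_iff mem_Collect_eq using o2 by (simp only:) simp
  ultimately obtain \<epsilon> where e: "0 < \<epsilon>" "\<epsilon> < 1" "m + \<epsilon> *\<^sub>R (s - m) \<in> V"
    by (rule small_step_in_open)
  define y where "y = ((1 - \<epsilon>)/2) *\<^sub>R p + ((1 - \<epsilon>)/2) *\<^sub>R q + \<epsilon> *\<^sub>R s"
  have "y = m + \<epsilon> *\<^sub>R (s - m)" unfolding y_def m_def by (simp add: prod_eq_iff field_simps)
  then have yV: "y \<in> V" using e by simp
  have pqy: "orient2d p q y = \<epsilon> * orient2d p q s"
    unfolding y_def by (subst orient2d_affine_combination) (auto simp: field_simps)
  have "y \<in> convex hull {p, q, s}"
    unfolding y_def convex_hull_3 using e
    by (intro CollectI exI[of _ "(1 - \<epsilon>)/2"] exI[of _ \<epsilon>]) auto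
  moreover have "0 \<le> orient2d p q y / orient2d p q s'"
    unfolding pqy using mult_nonneg_nonneg[of \<epsilon> "orient2d p q s / orient2d p q s'"] e same_side by simp
  then have "y \<in> convex hull {p, q, s'}"
    using yV unfolding convex_hull_3_iff_orient2d[OF o2] V_def by simp
  moreover have "{p, q, s} \<inter> {p, q, s'} = {p, q}" using d by auto
  ultimately have "y \<in> convex hull {p, q}" using convex_hull_triangles_Int[OF T T'] by (metis IntI)
  then show False using orient2d_eq_0_if_in_segment pqy e o1 by simp
qed

lemma card_triangles_at_edge_le_2:
  assumes pq: "p \<noteq> q"
  shows "card {T\<in>\<T>. p \<in> T \<and> q \<in> T} \<le> 2"
proof (rule ccontr)
  assume "\<not> ?thesis"
  then have "3 \<le> card {T\<in>\<T>. p \<in> T \<and> q \<in> T}" by simp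
  then obtain X where X: "X \<subseteq> {T\<in>\<T>. p \<in> T \<and> q \<in> T}" "card X = 3"
    by (rule obtain_subset_with_card_n)
  then obtain T1 T2 T3 where T: "X = {T1, T2, T3}" "T1 \<noteq> T2" "T1 \<noteq> T3" "T2 \<noteq> T3"
    unfolding card_3_iff by blast
  have T1: "T1 \<in> \<T>" "p \<in> T1" "q \<in> T1" and T2: "T2 \<in> \<T>" "p \<in> T2" "q \<in> T2"
    and T3: "T3 \<in> \<T>" "p \<in> T3" "q \<in> T3"
    using X(1) T(1) by auto
  obtain s1 where s1: "T1 = {p, q, s1}" "s1 \<noteq> p" "s1 \<noteq> q" "orient2d p q s1 \<noteq> 0"
    using triangle_at_edge[OF T1 pq] .
  obtain s2 where s2: "T2 = {p, q, s2}" "s2 \<noteq> p" "s2 \<noteq> q" "orient2d p q s2 \<noteq> 0"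
    using triangle_at_edge[OF T2 pq] .
  obtain s3 where s3: "T3 = {p, q, s3}" "s3 \<noteq> p" "s3 \<noteq> q" "orient2d p q s3 \<noteq> 0"
    using triangle_at_edge[OF T3 pq] .
  have "s1 \<noteq> s2" "s1 \<noteq> s3" "s2 \<noteq> s3" using T s1(1) s2(1) s3(1) by auto
  have "orient2d p q s1 * orient2d p q s2 < 0"
    by (rule orient2d_opposite_sides) (use T1 T2 s1 s2 pq \<open>s1 \<noteq> s2\<close> in auto)
  moreover have "orient2d p q s1 * orient2d p q s3 < 0"
    by (rule orient2d_opposite_sides) (use T1 T3 s1 s3 pq \<open>s1 \<noteq> s3\<close> in auto)
  moreover have "orient2d p q s2 * orient2d p q s3 < 0"
    by (rule orient2d_opposite_sides) (use T2 T3 s2 s3 pq \<open>s2 \<noteq> s3\<close> in auto)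
  ultimately show False by (auto simp: mult_less_0_iff)
qed

lemma internal_edgeI:
  assumes T: "T \<in> \<T>" "T' \<in> \<T>" "T \<noteq> T'"
    and pq: "p \<in> T" "q \<in> T" "p \<in> T'" "q \<in> T'" "p \<noteq> q"
  shows "{p, q} \<in> internal_edges \<T>" and "{T\<in>\<T>. {p, q} \<subseteq> T} = {T, T'}"
proof -
  let ?S = "{T\<in>\<T>. {p, q} \<subseteq> T}"
  have fin: "finite ?S" using finite_triangles by simp
  have sub: "{T, T'} \<subseteq> ?S" using T pq by auto
  have "card {T, T'} = 2" using T(3) by simp
  moreover have "card ?S \<le> 2" using card_triangles_at_edge_le_2[OF pq(5)] by simp
  ultimately have card: "card ?S = 2" using card_mono[OF fin sub] by simp
  then show "?S = {T, T'}" using card_subset_eq[OF fin sub] \<open>card {T, T'} = 2\<close> by simp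
  have "{p, q} \<in> mesh_edges \<T>" unfolding mesh_edges_def using T pq by auto
  then show "{p, q} \<in> internal_edges \<T>" unfolding internal_edges_def using card by simp
qed

lemma open_segment_subset_convex_hull:
  "p \<in> T \<Longrightarrow> q \<in> T \<Longrightarrow> open_segment p q \<subseteq> convex hull T"
  using open_closed_segment hull_mono[of "{p, q}" T] by (fastforce simp: segment_convex_hull)

lemma open_segment_not_in_other_triangle:
  assumes T: "T \<in> \<T>" "T = {p, q, s}" "orient2d p q s \<noteq> 0"
    and T': "T' \<in> \<T>" "\<not> (p \<in> T' \<and> q \<in> T')"
    and x: "x \<in> open_segment p q"
  shows "x \<notin> convex hull T'"
proof
  assume "x \<in> convex hull T'"
  moreover have "x \<in> convex hull T" using open_segment_subset_convex_hull[of p T q] T(2) x by auto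
  ultimately have xi: "x \<in> convex hull (T \<inter> T')" using convex_hull_triangles_Int[OF T(1) T'(1)] by blast
  obtain u where u: "0 < u" "u < 1" "x = (1 - u) *\<^sub>R p + u *\<^sub>R q" using x unfolding in_segment by blast
  have "T \<inter> T' \<subseteq> {q, s} \<or> T \<inter> T' \<subseteq> {p, s}" unfolding T(2) using T'(2) by auto
  then show False
  proof
    assume "T \<inter> T' \<subseteq> {q, s}"
    then have "x \<in> convex hull {q, s}" using xi hull_mono[of "T \<inter> T'" "{q, s}"] by blast
    then have "orient2d q s x = 0" by (rule orient2d_eq_0_if_in_segment)
    moreover have "orient2d q s x = (1 - u) * orient2d p q s"
      unfolding u(3) orient2d_segment_combination orient2d_rotate(1)[of q s p] by simp
    ultimately show False using u T(3) by simp
  next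
    assume "T \<inter> T' \<subseteq> {p, s}"
    then have "x \<in> convex hull {p, s}" using xi hull_mono[of "T \<inter> T'" "{p, s}"] by blast
    then have "orient2d p s x = 0" by (rule orient2d_eq_0_if_in_segment)
    moreover have "orient2d p s x = - u * orient2d p q s"
      unfolding u(3) orient2d_segment_combination orient2d_swap[of p s q] by simp
    ultimately show False using u T(3) by simp
  qed
qed

text \<open>If a point \<open>x\<close> of the edge lay in \<open>\<Omega>\<close>, a small step from \<open>x\<close> away from the third vertex would
  stay in \<open>\<Omega>\<close> but leave every triangle.\<close>

lemma open_segment_subset_frontier:
  assumes T: "T \<in> \<T>" "p \<in> T" "q \<in> T" "p \<noteq> q"
    and only: "{T'\<in>\<T>. p \<in> T' \<and> q \<in> T'} = {T}"
  shows "open_segment p q \<subseteq> frontier \<Omega>"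
proof
  fix x assume x: "x \<in> open_segment p q"
  obtain s where s: "T = {p, q, s}" "s \<noteq> p" "s \<noteq> q" "orient2d p q s \<noteq> 0"
    using triangle_at_edge[OF T] .
  define F where "F = \<Union>((\<lambda>T'. convex hull T') ` (\<T> - {T}))"
  have "closed F" unfolding F_def by (rule closed_Union_convex_hull) auto
  have "x \<notin> convex hull T'" if "T' \<in> \<T> - {T}" for T'
    using open_segment_not_in_other_triangle[OF T(1) s(1,4) _ _ x] that only by blast
  then have "x \<notin> F" unfolding F_def by blast
  have xT: "x \<in> convex hull T" using open_segment_subset_convex_hull[of p T q] T(2,3) x by auto
  then have "x \<in> closure \<Omega>" using Union_convex_hull_triangles T(1) by blast
  have "orient2d p q x = 0"
    using x open_closed_segment orient2d_eq_0_if_in_segment by (metis segment_convex_hull)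
  show "x \<in> frontier \<Omega>"
  proof (rule ccontr)
    assume "x \<notin> frontier \<Omega>"
    then have "x \<in> \<Omega> - F" using \<open>x \<in> closure \<Omega>\<close> \<open>x \<notin> F\<close> frontier_domain by blast
    moreover have "open (\<Omega> - F)" using open_domain \<open>closed F\<close> by (rule open_Diff)
    ultimately obtain \<epsilon> where e: "0 < \<epsilon>" "x + \<epsilon> *\<^sub>R (x - s) \<in> \<Omega> - F"
      using small_step_in_open by metis
    define y where "y = x + \<epsilon> *\<^sub>R (x - s)"
    have "y = (1 + \<epsilon>) *\<^sub>R x + (- \<epsilon>) *\<^sub>R s + 0 *\<^sub>R s" unfolding y_def by (simp add: algebra_simps)
    then have oy: "orient2d p q y = - \<epsilon> * orient2d p q s"
      using orient2d_affine_combination[of "1 + \<epsilon>" "- \<epsilon>" 0 p q x s s] \<open>orient2d p q x = 0\<close> by simp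
    have "y \<in> closure \<Omega>" using e closure_subset unfolding y_def by blast
    then obtain T' where T': "T' \<in> \<T>" "y \<in> convex hull T'"
      using Union_convex_hull_triangles by blast
    then have "T' = T" using e unfolding F_def y_def by blast
    then have "0 \<le> orient2d p q y / orient2d p q s"
      using T'(2) s(1) convex_hull_3_iff_orient2d[OF s(4)] by blast
    then show False unfolding oy using e s(4) by (simp add: zero_le_divide_iff mult_le_0_iff)
  qed
qed

lemma open_segment_in_interior_two_triangles:
  assumes T: "{p, q, s} \<in> \<T>" and T': "{p, q, s'} \<in> \<T>"
    and d: "p \<noteq> q" "p \<noteq> s" "q \<noteq> s" "p \<noteq> s'" "q \<noteq> s'" "s \<noteq> s'"
    and x: "x \<in> open_segment p q"
  shows "x \<in> interior (convex hull {p, q, s} \<union> convex hull {p, q, s'})"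
proof -
  have o1: "orient2d p q s \<noteq> 0" and o2: "orient2d p q s' \<noteq> 0"
    using orient2d_triangle_nonzero T T' d by blast+
  have opp: "orient2d p q s * orient2d p q s' < 0" by (rule orient2d_opposite_sides[OF T T' d])
  obtain u where u: "0 < u" "u < 1" "x = (1 - u) *\<^sub>R p + u *\<^sub>R q" using x unfolding in_segment by blast
  have at_x: "orient2d q t x = (1 - u) * orient2d p q t" "orient2d t p x = u * orient2d p q t" for t
    unfolding u(3) orient2d_segment_combination orient2d_rotate(1)[of q t p] orient2d_rotate(2)[of t p q]
    by simp_all
  define V where "V = {y. 0 < orient2d q s y / orient2d p q s} \<inter> {y. 0 < orient2d s p y / orient2d p q s}
     \<inter> {y. 0 < orient2d q s' y / orient2d p q s'} \<inter> {y. 0 < orient2d s' p y / orient2d p q s'}"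
  show ?thesis
  proof (rule interiorI)
    show "open V" unfolding V_def by (intro open_Int open_Collect_less continuous_intros) (auto simp: o1 o2)
    show "x \<in> V" unfolding V_def using u(1,2) o1 o2 by (simp add: at_x)
    show "V \<subseteq> convex hull {p, q, s} \<union> convex hull {p, q, s'}"
    proof
      fix y assume y: "y \<in> V"
      show "y \<in> convex hull {p, q, s} \<union> convex hull {p, q, s'}"
      proof (cases "0 \<le> orient2d p q y / orient2d p q s")
        case True
        then have "y \<in> convex hull {p, q, s}"
          using y unfolding convex_hull_3_iff_orient2d[OF o1] V_def by simp
        then show ?thesis by blast
      next
        case False
        then have "0 \<le> orient2d p q y / orient2d p q s'" using opp
          by (auto simp: divide_less_0_iff zero_le_divide_iff mult_less_0_iff)
        then have "y \<in> convex hull {p, q, s'}"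
          using y unfolding convex_hull_3_iff_orient2d[OF o2] V_def by simp
        then show ?thesis by blast
      qed
    qed
  qed
qed

lemma vertex_not_in_open_segment:
  assumes "T \<in> \<T>" "p \<in> T" "q \<in> T" "T' \<in> \<T>" "z \<in> T'"
  shows "z \<notin> open_segment p q"
proof
  assume z: "z \<in> open_segment p q"
  then have "p \<noteq> q" "z \<noteq> p" "z \<noteq> q" by (auto simp: open_segment_def)
  obtain s where s: "T = {p, q, s}" "orient2d p q s \<noteq> 0"
    using triangle_at_edge[OF assms(1-3) \<open>p \<noteq> q\<close>] by metis
  have "z \<in> T"
    using vertex_in_convex_hull_triangle[OF assms(1,4,5)] open_segment_subset_convex_hull[OF assms(2,3)] z
    by blast
  then have "z = s" using s(1) \<open>z \<noteq> p\<close> \<open>z \<noteq> q\<close> by blast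
  moreover have "orient2d p q z = 0"
    using z open_closed_segment orient2d_eq_0_if_in_segment by (metis segment_convex_hull)
  ultimately show False using s(2) by simp
qed

lemma in_open_segment_if_shorter_ray:
  fixes p q q' :: "'a::real_vector"
  assumes "p \<noteq> q" "0 < a" "a < b" "a *\<^sub>R (q - p) = b *\<^sub>R (q' - p)"
  shows "q' \<in> open_segment p q"
proof -
  have "q' - p = (1 / b) *\<^sub>R (b *\<^sub>R (q' - p))" using assms(2,3) by simp
  also have "\<dots> = (a / b) *\<^sub>R (q - p)" unfolding assms(4)[symmetric] by simp
  finally have "q' - p = (a / b) *\<^sub>R (q - p)" .
  then have "q' = (1 - a / b) *\<^sub>R p + (a / b) *\<^sub>R q" by (simp add: algebra_simps)
  then show ?thesis unfolding in_segment using assms(1-3) by (intro conjI exI[of _ "a / b"]) auto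
qed

lemma open_segments_at_vertex_disjoint:
  assumes Ti: "Ti \<in> \<T>" "p \<in> Ti" "qi \<in> Ti" "p \<noteq> qi"
    and Tj: "Tj \<in> \<T>" "p \<in> Tj" "qj \<in> Tj" "p \<noteq> qj" and "qi \<noteq> qj"
  shows "open_segment p qi \<inter> open_segment p qj = {}"
proof (rule ccontr)
  assume "open_segment p qi \<inter> open_segment p qj \<noteq> {}"
  then obtain y where "y \<in> open_segment p qi" "y \<in> open_segment p qj" by blast
  then obtain a b where "0 < a" "y = (1 - a) *\<^sub>R p + a *\<^sub>R qi" "0 < b" "y = (1 - b) *\<^sub>R p + b *\<^sub>R qj"
    unfolding in_segment by blast
  then have ab: "0 < a" "0 < b" "a *\<^sub>R (qi - p) = b *\<^sub>R (qj - p)" by (auto simp: algebra_simps)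
  consider "a < b" | "b < a" | "a = b" by linarith
  then show False
  proof cases
    case 1
    then have "qj \<in> open_segment p qi" using in_open_segment_if_shorter_ray Ti(4) ab by blast
    then show ?thesis using vertex_not_in_open_segment[OF Ti(1-3) Tj(1,3)] by blast
  next
    case 2
    then have "qi \<in> open_segment p qj" using in_open_segment_if_shorter_ray Tj(4) ab by metis
    then show ?thesis using vertex_not_in_open_segment[OF Tj(1-3) Ti(1,3)] by blast
  next
    case 3
    then show ?thesis using ab \<open>qi \<noteq> qj\<close> by simp
  qed
qed

section \<open>Edge-connectedness of vertex stars\<close>

definition edge_adjacent :: "pt \<Rightarrow> pt set \<Rightarrow> pt set \<Rightarrow> bool" where
  "edge_adjacent p T T' \<longleftrightarrow> T \<in> \<T> \<and> T' \<in> \<T> \<and> p \<in> T \<and> p \<in> T' \<and> (\<exists>q. q \<noteq> p \<and> q \<in> T \<and> q \<in> T')"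

definition proper_substar :: "pt \<Rightarrow> pt set set \<Rightarrow> bool" where
  "proper_substar p C \<longleftrightarrow> C \<subseteq> \<T> \<and> (\<forall>T\<in>C. p \<in> T) \<and> C \<noteq> {}
     \<and> (\<forall>T\<in>C. \<forall>T'. edge_adjacent p T T' \<longrightarrow> T' \<in> C) \<and> (\<exists>T'\<in>\<T>. p \<in> T' \<and> T' \<notin> C)"

definition free_edge_ends :: "pt \<Rightarrow> pt set set \<Rightarrow> pt set" where
  "free_edge_ends p C = {q. q \<noteq> p \<and> (\<exists>T\<in>C. q \<in> T) \<and> card {T\<in>\<T>. p \<in> T \<and> q \<in> T} = 1}"

definition isolating_radius :: "pt \<Rightarrow> real \<Rightarrow> bool" where
  "isolating_radius p \<rho> \<longleftrightarrow> (\<forall>T\<in>\<T>. p \<notin> T \<longrightarrow> ball p \<rho> \<inter> convex hull T = {})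
     \<and> (\<forall>T\<in>\<T>. p \<in> T \<longrightarrow> ball p \<rho> \<inter> convex hull (T - {p}) = {})"

lemma proper_substarD:
  assumes "proper_substar p C" "T \<in> C"
  shows "T \<in> \<T>" "p \<in> T"
  using assms unfolding proper_substar_def by blast+

lemma proper_substar_adjacent_closed:
  "proper_substar p C \<Longrightarrow> T \<in> C \<Longrightarrow> edge_adjacent p T T' \<Longrightarrow> T' \<in> C"
  unfolding proper_substar_def by blast

lemma isolating_radius_mono: "isolating_radius p \<rho> \<Longrightarrow> \<rho>' \<le> \<rho> \<Longrightarrow> isolating_radius p \<rho>'"
  unfolding isolating_radius_def using subset_ball[of \<rho>' \<rho> p] by blast

lemma isolating_radius_exists:
  assumes "p \<in> mesh_vertices \<T>"
  obtains \<rho> where "\<rho> > 0" "isolating_radius p \<rho>"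
proof -
  obtain T0 where T0: "T0 \<in> \<T>" "p \<in> T0" using assms unfolding mesh_vertices_def by blast
  define K where "K = \<Union>((\<lambda>T. convex hull T) ` {T\<in>\<T>. p \<notin> T})
    \<union> \<Union>((\<lambda>T. convex hull (T - {p})) ` {T\<in>\<T>. p \<in> T})"
  have "closed K" unfolding K_def using finite_triangles finite_triangle
    by (intro closed_Un closed_Union) (auto intro!: compact_imp_closed finite_imp_compact_convex_hull)
  moreover have "p \<notin> K"
  proof
    assume "p \<in> K"
    then consider T where "T \<in> \<T>" "p \<notin> T" "p \<in> convex hull T"
      | T where "T \<in> \<T>" "p \<in> T" "p \<in> convex hull (T - {p})"
      unfolding K_def by blast
    then show False
    proof cases
      case 1
      then show False using vertex_in_convex_hull_triangle[OF _ T0] by blast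
    next
      case 2
      then have "affine_dependent T"
        unfolding affine_dependent_def using convex_hull_subset_affine_hull by blast
      then show False using triangle_affine_independent[OF 2(1)] by blast
    qed
  qed
  ultimately obtain \<rho> where "\<rho> > 0" "ball p \<rho> \<subseteq> - K"
    using open_contains_ball[of "- K"] by auto
  moreover have "isolating_radius p \<rho>"
    unfolding isolating_radius_def
  proof (intro conjI ballI impI)
    fix T assume "T \<in> \<T>" "p \<notin> T"
    then have "convex hull T \<subseteq> K" unfolding K_def by blast
    then show "ball p \<rho> \<inter> convex hull T = {}" using calculation(2) by blast
  next
    fix T assume "T \<in> \<T>" "p \<in> T"
    then have "convex hull (T - {p}) \<subseteq> K" unfolding K_def by blast
    then show "ball p \<rho> \<inter> convex hull (T - {p}) = {}" using calculation(2) by blast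
  qed
  ultimately show ?thesis using that by blast
qed

lemma proper_substar_convex_hull_Int:
  assumes C: "proper_substar p C" "T \<in> C" and T': "T' \<in> \<T>" "p \<in> T'" "T' \<notin> C"
  shows "convex hull T \<inter> convex hull T' = {p}"
proof -
  note T = proper_substarD[OF C]
  have "\<not> edge_adjacent p T T'" using C T'(3) unfolding proper_substar_def by blast
  then have "T \<inter> T' = {p}" using T T' unfolding edge_adjacent_def by blast
  then show ?thesis using convex_hull_triangles_Int[OF T(1) T'(1)] by simp
qed

lemma punctured_ball_meets_triangle:
  assumes "T \<in> \<T>" "p \<in> T" "\<rho> > 0"
  obtains y where "y \<in> ball p \<rho> - {p}" "y \<in> convex hull T"
proof -
  obtain q s where "T = {p, q, s}" "p \<noteq> q" using triangle_at_vertex[OF assms(1,2)] by metis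
  then have "q \<in> T" by simp
  obtain \<epsilon> where e: "0 < \<epsilon>" "\<epsilon> < 1" "p + \<epsilon> *\<^sub>R (q - p) \<in> ball p \<rho>"
    by (rule small_step_in_open[of "ball p \<rho>" p]) (use assms(3) in auto)
  have "p + \<epsilon> *\<^sub>R (q - p) = (1 - \<epsilon>) *\<^sub>R p + \<epsilon> *\<^sub>R q" by (simp add: algebra_simps)
  then have "p + \<epsilon> *\<^sub>R (q - p) \<in> open_segment p q"
    unfolding in_segment using e(1,2) \<open>p \<noteq> q\<close> by blast
  moreover have "p + \<epsilon> *\<^sub>R (q - p) \<noteq> p" using e(1) \<open>p \<noteq> q\<close> by simp
  ultimately show ?thesis
    using that e(3) open_segment_subset_convex_hull[OF assms(2) \<open>q \<in> T\<close>] by blast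
qed

lemma proper_substar_hulls_not_open:
  assumes C: "proper_substar p C" and "\<rho> > 0"
  shows "\<not> open ((ball p \<rho> - {p}) \<inter> \<Union>((\<lambda>T. convex hull T) ` C))"
proof
  define U where "U = ball p \<rho> - {p}"
  define W where "W = \<Union>((\<lambda>T. convex hull T) ` C)"
  assume "open ((ball p \<rho> - {p}) \<inter> \<Union>((\<lambda>T. convex hull T) ` C))"
  then have "openin (top_of_set U) (U \<inter> (U \<inter> W))" unfolding U_def W_def by (rule openin_open_Int)
  then have "openin (top_of_set U) (U \<inter> W)" by simp
  moreover have "closedin (top_of_set U) (U \<inter> W)"
    using C unfolding W_def proper_substar_def by (intro closedin_closed_Int closed_Union_convex_hull) blast
  moreover have "connected U" unfolding U_def by (rule connected_punctured_ball) simp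
  ultimately have UW: "U \<inter> W = {} \<or> U \<inter> W = U" unfolding connected_clopen by blast
  obtain T0 where "T0 \<in> C" using C unfolding proper_substar_def by blast
  then obtain y0 where "y0 \<in> U" "y0 \<in> convex hull T0"
    using punctured_ball_meets_triangle proper_substarD[OF C] \<open>\<rho> > 0\<close> unfolding U_def by metis
  then have "U \<subseteq> W" using UW \<open>T0 \<in> C\<close> unfolding W_def by blast
  obtain T' where T': "T' \<in> \<T>" "p \<in> T'" "T' \<notin> C" using C unfolding proper_substar_def by blast
  then obtain y where y: "y \<in> U" "y \<in> convex hull T'"
    using punctured_ball_meets_triangle \<open>\<rho> > 0\<close> unfolding U_def by metis
  then obtain T where "T \<in> C" "y \<in> convex hull T" using \<open>U \<subseteq> W\<close> unfolding W_def by blast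
  then have "y = p" using proper_substar_convex_hull_Int[OF C \<open>T \<in> C\<close> T'] y by blast
  then show False using y unfolding U_def by blast
qed

lemma proper_substar_not_at_interior_vertex:
  assumes C: "proper_substar p C" and \<rho>: "\<rho> > 0" "isolating_radius p \<rho>"
  shows "p \<notin> \<Omega>"
proof
  assume "p \<in> \<Omega>"
  then obtain r where r: "r > 0" "ball p r \<subseteq> \<Omega>" using open_domain open_contains_ball by blast
  define U where "U = ball p (min \<rho> r) - {p}"
  have rad: "isolating_radius p (min \<rho> r)" using \<rho>(2) isolating_radius_mono by simp
  define W' where "W' = \<Union>((\<lambda>T. convex hull T) ` {T\<in>\<T>. p \<in> T \<and> T \<notin> C})"
  have "closed W'" unfolding W'_def by (rule closed_Union_convex_hull) blast
  have "U \<inter> \<Union>((\<lambda>T. convex hull T) ` C) = U - W'"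
  proof
    show "U \<inter> \<Union>((\<lambda>T. convex hull T) ` C) \<subseteq> U - W'"
    proof
      fix y assume y: "y \<in> U \<inter> \<Union>((\<lambda>T. convex hull T) ` C)"
      then obtain T where T: "T \<in> C" "y \<in> convex hull T" by blast
      have "y \<notin> convex hull T'" if "T' \<in> \<T>" "p \<in> T'" "T' \<notin> C" for T'
        using proper_substar_convex_hull_Int[OF C T(1) that] T(2) y unfolding U_def by blast
      then show "y \<in> U - W'" using y unfolding W'_def by blast
    qed
    show "U - W' \<subseteq> U \<inter> \<Union>((\<lambda>T. convex hull T) ` C)"
    proof
      fix y assume y: "y \<in> U - W'"
      then have "y \<in> \<Omega>" using r(2) unfolding U_def by auto
      then have "y \<in> closure \<Omega>" using closure_subset by blast
      then obtain T where T: "T \<in> \<T>" "y \<in> convex hull T" using Union_convex_hull_triangles by blast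
      have "p \<in> T" using rad T y unfolding isolating_radius_def U_def by blast
      then have "T \<in> C" using y T unfolding W'_def by blast
      then show "y \<in> U \<inter> \<Union>((\<lambda>T. convex hull T) ` C)" using y T by blast
    qed
  qed
  moreover have "open (U - W')" unfolding U_def using \<open>closed W'\<close> by (intro open_Diff) auto
  ultimately show False
    using proper_substar_hulls_not_open[OF C, of "min \<rho> r"] \<rho>(1) r(1) unfolding U_def by simp
qed

lemma open_segment_in_interior_substar:
  assumes C: "proper_substar p C" "T \<in> C" "T = {p, q, s}" and d: "p \<noteq> q" "p \<noteq> s" "q \<noteq> s"
    and q: "q \<notin> free_edge_ends p C" and x: "x \<in> open_segment p q"
  shows "x \<in> interior (\<Union>((\<lambda>T. convex hull T) ` C))"
proof -
  note T = proper_substarD[OF C(1,2)]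
  have "q \<in> T" using C(3) by simp
  let ?S = "{T\<in>\<T>. p \<in> T \<and> q \<in> T}"
  have "card ?S \<noteq> 1"
    using q d(1) C(2) \<open>q \<in> T\<close> unfolding free_edge_ends_def by auto
  then have "?S \<noteq> {T}" by (metis is_singletonI is_singleton_altdef)
  moreover have "T \<in> ?S" using T \<open>q \<in> T\<close> by simp
  ultimately obtain T' where "T' \<in> ?S" "T' \<noteq> T" by blast
  then have T': "T' \<in> \<T>" "p \<in> T'" "q \<in> T'" "T' \<noteq> T" by auto
  obtain s' where s': "T' = {p, q, s'}" "s' \<noteq> p" "s' \<noteq> q"
    using triangle_at_edge[OF T'(1-3) d(1)] by metis
  have "edge_adjacent p T T'"
    unfolding edge_adjacent_def using T T'(1-3) \<open>q \<in> T\<close> d(1) by (intro conjI exI[of _ q]) auto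
  then have "T' \<in> C" by (rule proper_substar_adjacent_closed[OF C(1,2)])
  have "s \<noteq> s'"
  proof
    assume "s = s'"
    then have "T' = T" using C(3) s'(1) by simp
    then show False using T'(4) by contradiction
  qed
  have "x \<in> interior (convex hull {p, q, s} \<union> convex hull {p, q, s'})"
    by (rule open_segment_in_interior_two_triangles)
      (use T(1) T'(1) C(3) s'(1) s'(2,3) d x \<open>s \<noteq> s'\<close> in simp_all)
  moreover have "convex hull {p, q, s} \<union> convex hull {p, q, s'} \<subseteq> \<Union>((\<lambda>T. convex hull T) ` C)"
    using C(2) \<open>T' \<in> C\<close> unfolding C(3)[symmetric] s'(1)[symmetric] by blast
  ultimately show ?thesis by (meson interior_mono subsetD)
qed

lemma proper_substar_point_in_interior:
  assumes C: "proper_substar p C" and \<rho>: "isolating_radius p \<rho>" and free: "free_edge_ends p C = {}"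
    and x: "x \<in> ball p \<rho> - {p}" "T \<in> C" "x \<in> convex hull T"
  shows "x \<in> interior (\<Union>((\<lambda>T. convex hull T) ` C))"
proof -
  note T = proper_substarD[OF C x(2)]
  obtain q s where qs: "T = {p, q, s}" "p \<noteq> q" "p \<noteq> s" "q \<noteq> s" and D: "orient2d p q s \<noteq> 0"
    using triangle_at_vertex[OF T] by metis
  define a where "a = orient2d q s x / orient2d p q s"
  define b where "b = orient2d s p x / orient2d p q s"
  define c where "c = orient2d p q x / orient2d p q s"
  have nonneg: "0 \<le> a" "0 \<le> b" "0 \<le> c"
    using x(3) unfolding qs(1) convex_hull_3_iff_orient2d[OF D] a_def b_def c_def by auto
  have sum: "a + b + c = 1" and x_eq: "x = a *\<^sub>R p + b *\<^sub>R q + c *\<^sub>R s"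
    unfolding a_def b_def c_def by (rule barycentric_by_orient2d[OF D])+
  have "a \<noteq> 0"
  proof
    assume "a = 0"
    then have "x \<in> convex hull {q, s}"
      unfolding convex_hull_2 using x_eq sum nonneg by (intro CollectI exI[of _ b] exI[of _ c]) auto
    moreover have "T - {p} = {q, s}" using qs(1-3) by auto
    ultimately have "x \<in> convex hull (T - {p})" by simp
    then show False using \<rho> T x(1) unfolding isolating_radius_def by blast
  qed
  then have "0 < a" using nonneg(1) by simp
  have "\<not> (b = 0 \<and> c = 0)" using x_eq sum x(1) by auto
  moreover have W: "convex hull T \<subseteq> \<Union>((\<lambda>T. convex hull T) ` C)" using x(2) by blast
  ultimately consider "0 < b" "0 < c" | "c = 0" "0 < b" | "b = 0" "0 < c" using nonneg by linarith
  then show ?thesis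
  proof cases
    case 1
    then have "x \<in> interior (convex hull {p, q, s})"
      using interior_triangle_if_orient2d[OF D, of x] \<open>0 < a\<close> unfolding a_def b_def c_def by blast
    then show ?thesis using W interior_mono unfolding qs(1) by blast
  next
    case 2
    then have "x = (1 - b) *\<^sub>R p + b *\<^sub>R q" "b < 1" using x_eq sum \<open>0 < a\<close> by auto
    then have "x \<in> open_segment p q"
      unfolding in_segment using 2(2) qs(2) by blast
    then show ?thesis using open_segment_in_interior_substar[OF C x(2) qs(1-4)] free by simp
  next
    case 3
    then have "x = (1 - c) *\<^sub>R p + c *\<^sub>R s" "c < 1" using x_eq sum \<open>0 < a\<close> by auto
    then have "x \<in> open_segment p s"
      unfolding in_segment using 3(2) qs(3) by blast
    moreover have "T = {p, s, q}" using qs(1) by auto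
    ultimately show ?thesis
      using open_segment_in_interior_substar[OF C x(2) _ qs(3) qs(2) qs(4)[symmetric]] free by simp
  qed
qed

lemma free_edge_ends_nonempty:
  assumes C: "proper_substar p C" and \<rho>: "\<rho> > 0" "isolating_radius p \<rho>"
  shows "free_edge_ends p C \<noteq> {}"
proof
  assume free: "free_edge_ends p C = {}"
  let ?W = "\<Union>((\<lambda>T. convex hull T) ` C)"
  have "(ball p \<rho> - {p}) \<inter> ?W = (ball p \<rho> - {p}) \<inter> interior ?W"
    using proper_substar_point_in_interior[OF C \<rho>(2) free] interior_subset by blast
  moreover have "open ((ball p \<rho> - {p}) \<inter> interior ?W)" by (intro open_Int open_Diff) auto
  ultimately show False using proper_substar_hulls_not_open[OF C \<rho>(1)] by simp
qed

lemma triangles_at_substar_edge: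
  assumes C: "proper_substar p C" and q: "q \<in> \<Union>C - {p}"
  shows "{T\<in>\<T>. p \<in> T \<and> q \<in> T} = {T\<in>C. q \<in> T}"
proof
  show "{T\<in>C. q \<in> T} \<subseteq> {T\<in>\<T>. p \<in> T \<and> q \<in> T}" using proper_substarD[OF C] by blast
  obtain T where T: "T \<in> C" "q \<in> T" using q by blast
  show "{T\<in>\<T>. p \<in> T \<and> q \<in> T} \<subseteq> {T\<in>C. q \<in> T}"
  proof
    fix T' assume T': "T' \<in> {T\<in>\<T>. p \<in> T \<and> q \<in> T}"
    have "edge_adjacent p T T'"
      unfolding edge_adjacent_def using proper_substarD[OF C T(1)] T(2) T' q by (intro conjI exI[of _ q]) auto
    then show "T' \<in> {T\<in>C. q \<in> T}" using proper_substar_adjacent_closed[OF C T(1)] T' by blast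
  qed
qed

text \<open>Double counting: every triangle of \<open>C\<close> has two edges at \<open>p\<close>, and every such edge lies in one
  or two triangles of \<open>C\<close>.\<close>

lemma card_free_edge_ends_ne_1:
  assumes C: "proper_substar p C"
  shows "card (free_edge_ends p C) \<noteq> 1"
proof -
  define E where "E = \<Union>C - {p}"
  define n where "n q = card {T\<in>C. q \<in> T}" for q
  have CT: "C \<subseteq> \<T>" using C unfolding proper_substar_def by blast
  have fC: "finite C" using CT finite_triangles finite_subset by blast
  have fE: "finite E" unfolding E_def using fC CT finite_triangle by blast
  have "q \<in> free_edge_ends p C \<longleftrightarrow> q \<in> E \<and> n q = 1" for q
  proof (cases "q \<in> E")
    case True
    then have "{T\<in>\<T>. p \<in> T \<and> q \<in> T} = {T\<in>C. q \<in> T}"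
      unfolding E_def by (rule triangles_at_substar_edge[OF C])
    then show ?thesis using True unfolding free_edge_ends_def n_def E_def by auto
  next
    case False
    then show ?thesis unfolding free_edge_ends_def E_def by auto
  qed
  then have free: "free_edge_ends p C = {q\<in>E. n q = 1}" by blast
  have n12: "n q = 1 \<or> n q = 2" if "q \<in> E" for q
  proof -
    have "p \<noteq> q" using that unfolding E_def by blast
    moreover have "{T\<in>\<T>. p \<in> T \<and> q \<in> T} = {T\<in>C. q \<in> T}"
      using that unfolding E_def by (rule triangles_at_substar_edge[OF C])
    ultimately have "n q \<le> 2" using card_triangles_at_edge_le_2[of p q] unfolding n_def by simp
    moreover have "{T\<in>C. q \<in> T} \<noteq> {}" using that unfolding E_def by blast
    then have "n q \<noteq> 0" unfolding n_def using fC by simp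
    ultimately show ?thesis by linarith
  qed
  have "card {q\<in>E. q \<in> T} = 2" if "T \<in> C" for T
  proof -
    have "{q\<in>E. q \<in> T} = T - {p}" using that unfolding E_def by blast
    then show ?thesis
      using card_triangle[of T] finite_triangle[of T] proper_substarD[OF C that] by simp
  qed
  then have "(\<Sum>q\<in>E. n q) = (\<Sum>T\<in>C. 2)"
    unfolding n_def by (intro sum_multicount_gen[OF fE fC]) blast
  then have "2 * card C = (\<Sum>q\<in>E. n q)" by simp
  also have "\<dots> = (\<Sum>q\<in>{q\<in>E. n q = 2}. n q) + (\<Sum>q\<in>{q\<in>E. n q = 1}. n q)"
  proof -
    have "E = {q\<in>E. n q = 2} \<union> {q\<in>E. n q = 1}" using n12 by blast
    moreover have "{q\<in>E. n q = 2} \<inter> {q\<in>E. n q = 1} = {}" by auto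
    ultimately show ?thesis using fE sum.union_disjoint[of "{q\<in>E. n q = 2}" "{q\<in>E. n q = 1}" n]
      by simp
  qed
  also have "\<dots> = 2 * card {q\<in>E. n q = 2} + card {q\<in>E. n q = 1}" by simp
  finally show ?thesis unfolding free by presburger
qed

lemma free_edge_endD:
  assumes C: "proper_substar p C" and q: "q \<in> free_edge_ends p C"
  obtains T where "T \<in> C" "q \<in> T" "q \<noteq> p" "{T'\<in>\<T>. p \<in> T' \<and> q \<in> T'} = {T}"
proof -
  obtain T where T: "T \<in> C" "q \<in> T" "q \<noteq> p" "card {T'\<in>\<T>. p \<in> T' \<and> q \<in> T'} = 1"
    using q unfolding free_edge_ends_def by blast
  moreover have "T \<in> {T'\<in>\<T>. p \<in> T' \<and> q \<in> T'}" using proper_substarD[OF C T(1)] T(2) by blast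
  ultimately have "{T'\<in>\<T>. p \<in> T' \<and> q \<in> T'} = {T}" by (metis card_1_singletonE singletonD)
  with T(1-3) show ?thesis by (rule that)
qed

lemma free_edge_open_segment_subset_frontier:
  assumes C: "proper_substar p C" and q: "q \<in> free_edge_ends p C"
  shows "open_segment p q \<subseteq> frontier \<Omega>"
proof -
  obtain T where T: "T \<in> C" "q \<in> T" "q \<noteq> p" "{T'\<in>\<T>. p \<in> T' \<and> q \<in> T'} = {T}"
    using free_edge_endD[OF assms] .
  show ?thesis
    by (rule open_segment_subset_frontier) (use proper_substarD[OF C T(1)] T in auto)
qed

lemma free_edge_ends_disjoint:
  assumes A: "proper_substar p A" and B: "proper_substar p B" and "A \<inter> B = {}"
  shows "free_edge_ends p A \<inter> free_edge_ends p B = {}"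
proof (rule ccontr)
  assume "free_edge_ends p A \<inter> free_edge_ends p B \<noteq> {}"
  then obtain q where qA: "q \<in> free_edge_ends p A" and qB: "q \<in> free_edge_ends p B" by blast
  obtain T where T: "T \<in> A" "q \<in> T" "q \<noteq> p" using free_edge_endD[OF A qA] by metis
  obtain T' where T': "T' \<in> B" "q \<in> T'" using free_edge_endD[OF B qB] by metis
  have "edge_adjacent p T T'"
    unfolding edge_adjacent_def using proper_substarD[OF A T(1)] proper_substarD[OF B T'(1)] T T'
    by (intro conjI exI[of _ q]) auto
  then have "T' \<in> A" by (rule proper_substar_adjacent_closed[OF A T(1)])
  then show False using \<open>A \<inter> B = {}\<close> T'(1) by blast
qed

lemma frontier_curve_through:
  assumes "p \<in> frontier \<Omega>"
  obtains c where "c homeomorphic sphere (0::pt) 1" "p \<in> c"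
    "\<And>S. connected S \<Longrightarrow> S \<subseteq> frontier \<Omega> \<Longrightarrow> p \<in> S \<Longrightarrow> S \<subseteq> c"
proof -
  obtain Cs where Cs: "finite Cs" "pairwise disjnt Cs" "frontier \<Omega> = \<Union>Cs"
    "\<And>c. c \<in> Cs \<Longrightarrow> c homeomorphic sphere (0::pt) 1"
    using domain unfolding polygonal_domain_def by blast
  have closed: "closed c" if "c \<in> Cs" for c
    using homeomorphic_compactness[OF Cs(4)[OF that]] by (simp add: compact_imp_closed)
  obtain c where "c \<in> Cs" "p \<in> c" using assms Cs(3) by blast
  then show ?thesis
    using that Cs(4) connected_subset_of_disjoint_closed[OF Cs(1,2) closed _ _ \<open>c \<in> Cs\<close>] Cs(3)
    by blast
qed

lemma free_edge_arm:
  assumes C: "proper_substar p C" and q: "q \<in> free_edge_ends p C"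
    and c: "\<And>S. connected S \<Longrightarrow> S \<subseteq> frontier \<Omega> \<Longrightarrow> p \<in> S \<Longrightarrow> S \<subseteq> c"
  shows "open_segment p q \<subseteq> c - {p}" "p \<in> closure (open_segment p q)"
proof -
  have "q \<noteq> p" using q unfolding free_edge_ends_def by blast
  then have cl: "closure (open_segment p q) = closed_segment p q" by simp
  then have "closed_segment p q \<subseteq> frontier \<Omega>"
    using closure_minimal[OF free_edge_open_segment_subset_frontier[OF C q] frontier_closed] by simp
  then have "closed_segment p q \<subseteq> c" using c by simp
  then show "open_segment p q \<subseteq> c - {p}" by (auto simp: open_segment_def)
  show "p \<in> closure (open_segment p q)" using cl by simp
qed

lemma free_edge_end_in_triangle:
  assumes C: "proper_substar p C" and q: "q \<in> free_edge_ends p C"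
  obtains T where "T \<in> \<T>" "p \<in> T" "q \<in> T" "p \<noteq> q"
proof -
  obtain T where "T \<in> C" "q \<in> T" "q \<noteq> p" using free_edge_endD[OF C q] by metis
  then show ?thesis using that proper_substarD[OF C] by metis
qed

lemma disjoint_proper_substars_impossible:
  assumes A: "proper_substar p A" and B: "proper_substar p B" and AB: "A \<inter> B = {}"
  shows False
proof -
  obtain T0 where "T0 \<in> A" using A unfolding proper_substar_def by blast
  then have "p \<in> mesh_vertices \<T>" using proper_substarD[OF A] unfolding mesh_vertices_def by blast
  then obtain \<rho> where \<rho>: "\<rho> > 0" "isolating_radius p \<rho>" by (rule isolating_radius_exists)
  have "p \<in> frontier \<Omega>"
    using proper_substar_not_at_interior_vertex[OF A \<rho>] \<open>p \<in> mesh_vertices \<T>\<close>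
      mesh_vertices_subset_closure frontier_domain by blast
  then obtain c where c: "c homeomorphic sphere (0::pt) 1" "p \<in> c"
    and arm_in_c: "\<And>S. connected S \<Longrightarrow> S \<subseteq> frontier \<Omega> \<Longrightarrow> p \<in> S \<Longrightarrow> S \<subseteq> c"
    by (rule frontier_curve_through) blast
  obtain q1 where q1: "q1 \<in> free_edge_ends p A" using free_edge_ends_nonempty[OF A \<rho>] by blast
  moreover have "free_edge_ends p A \<noteq> {q1}" using card_free_edge_ends_ne_1[OF A] by auto
  ultimately obtain q2 where q2: "q2 \<in> free_edge_ends p A" "q2 \<noteq> q1" by blast
  obtain q3 where q3: "q3 \<in> free_edge_ends p B" using free_edge_ends_nonempty[OF B \<rho>] by blast
  have "q1 \<noteq> q3" "q2 \<noteq> q3" using free_edge_ends_disjoint[OF A B AB] q1 q2 q3 by blast+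
  have disj: "open_segment p qi \<inter> open_segment p qj = {}"
    if h: "qi \<in> free_edge_ends p Ci" "qj \<in> free_edge_ends p Cj" "proper_substar p Ci" "proper_substar p Cj"
      "qi \<noteq> qj" for qi qj Ci Cj
  proof -
    obtain Ti where "Ti \<in> \<T>" "p \<in> Ti" "qi \<in> Ti" "p \<noteq> qi"
      using free_edge_end_in_triangle[OF h(3,1)] .
    moreover obtain Tj where "Tj \<in> \<T>" "p \<in> Tj" "qj \<in> Tj" "p \<noteq> qj"
      using free_edge_end_in_triangle[OF h(4,2)] .
    ultimately show ?thesis using open_segments_at_vertex_disjoint h(5) by blast
  qed
  show False
  proof (rule Jordan_curve_no_three_arms[OF c])
    show "open_segment p q1 \<subseteq> c - {p}" "p \<in> closure (open_segment p q1)"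
      using free_edge_arm[OF A q1 arm_in_c] by blast+
    show "open_segment p q2 \<subseteq> c - {p}" "p \<in> closure (open_segment p q2)"
      using free_edge_arm[OF A q2(1) arm_in_c] by blast+
    show "open_segment p q3 \<subseteq> c - {p}" "p \<in> closure (open_segment p q3)"
      using free_edge_arm[OF B q3 arm_in_c] by blast+
    show "convex (open_segment p q1)" "convex (open_segment p q2)" "convex (open_segment p q3)"
      by simp_all
    show "open_segment p q1 \<inter> open_segment p q2 = {}" using disj[OF q1 q2(1) A A] q2(2) by metis
    show "open_segment p q1 \<inter> open_segment p q3 = {}" using disj[OF q1 q3 A B \<open>q1 \<noteq> q3\<close>] .
    show "open_segment p q2 \<inter> open_segment p q3 = {}" using disj[OF q2(1) q3 A B \<open>q2 \<noteq> q3\<close>] .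
  qed
qed

lemma edge_adjacent_sym: "edge_adjacent p T T' \<Longrightarrow> edge_adjacent p T' T"
  unfolding edge_adjacent_def by blast

lemma proper_substar_reachable:
  assumes "T0 \<in> \<T>" "p \<in> T0" "T1 \<in> \<T>" "p \<in> T1" "\<not> (edge_adjacent p)\<^sup>*\<^sup>* T0 T1"
  shows "proper_substar p {T. (edge_adjacent p)\<^sup>*\<^sup>* T0 T}"
proof -
  have "T \<in> \<T> \<and> p \<in> T" if "(edge_adjacent p)\<^sup>*\<^sup>* T0 T" for T
    using that by (induction rule: rtranclp_induct) (auto simp: assms(1,2) edge_adjacent_def)
  then show ?thesis
    unfolding proper_substar_def using assms(3-5) by (auto intro: rtranclp.rtrancl_into_rtrancl)
qed

lemma star_edge_connected:
  assumes T0: "T0 \<in> \<T>" "p \<in> T0" and T1: "T1 \<in> \<T>" "p \<in> T1"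
  shows "(edge_adjacent p)\<^sup>*\<^sup>* T0 T1"
proof (rule ccontr)
  assume not01: "\<not> (edge_adjacent p)\<^sup>*\<^sup>* T0 T1"
  have sym: "symp ((edge_adjacent p)\<^sup>*\<^sup>*)"
    by (rule symp_rtranclp) (auto intro: sympI edge_adjacent_sym)
  then have not10: "\<not> (edge_adjacent p)\<^sup>*\<^sup>* T1 T0" using not01 by (blast dest: sympD)
  have "{T. (edge_adjacent p)\<^sup>*\<^sup>* T0 T} \<inter> {T. (edge_adjacent p)\<^sup>*\<^sup>* T1 T} = {}"
    using not01 sym by (auto dest: sympD intro: rtranclp_trans)
  then show False
    using disjoint_proper_substars_impossible
      proper_substar_reachable[OF T0 T1 not01] proper_substar_reachable[OF T1 T0 not10] by blast
qed

end

section \<open>The left kernel of \<open>G\<close>\<close>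

lemma affine_vanishing_at_two_points:
  fixes h0 h1 h2 xa ya xb yb :: real
  assumes ne: "(xa, ya) \<noteq> (xb, yb)" and hA: "h0 + h1 * xa + h2 * ya = 0" and hB: "h0 + h1 * xb + h2 * yb = 0"
  shows "\<exists>m. h0 + (xb * ya - yb * xa) * m = 0 \<and> h1 + (yb - ya) * m = 0 \<and> h2 + (xa - xb) * m = 0"
proof -
  have cr: "h1 * (xb - xa) + h2 * (yb - ya) = 0" using hA hB by (simp add: algebra_simps)
  show ?thesis
  proof (cases "yb - ya = 0")
    case False
    define m where "m = - h1 / (yb - ya)"
    have 1: "h1 + (yb - ya) * m = 0" unfolding m_def using False by simp
    have "(yb - ya) * (h2 + (xa - xb) * m) = h2 * (yb - ya) - (xa - xb) * h1"
      unfolding m_def using False by (simp add: field_simps)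
    also have "\<dots> = 0" using cr by (simp add: algebra_simps)
    finally have 2: "h2 + (xa - xb) * m = 0" using False by simp
    have "(yb - ya) * (h0 + (xb * ya - yb * xa) * m) = (yb - ya) * h0 - (xb * ya - yb * xa) * h1"
      unfolding m_def using False by (simp add: field_simps)
    also have "\<dots> = 0"
    proof -
      have h0: "h0 = - h1 * xa - h2 * ya" using hA by simp
      have "(yb - ya) * (- h1 * xa - h2 * ya) - (xb * ya - yb * xa) * h1 = - ya * (h1 * (xb - xa) + h2 * (yb - ya))"
        by (simp add: algebra_simps)
      then show ?thesis unfolding h0 using cr by simp
    qed
    finally have 3: "h0 + (xb * ya - yb * xa) * m = 0" using False by simp
    show ?thesis using 1 2 3 by blast
  next
    case True
    then have yb_eq: "yb = ya" by simp
    then have nx: "xa - xb \<noteq> 0" using ne by auto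
    have h1: "h1 = 0" using cr yb_eq nx by simp
    define m where "m = - h2 / (xa - xb)"
    have 2: "h2 + (xa - xb) * m = 0" unfolding m_def using nx by simp
    have "h0 = - h2 * ya" using hA h1 by simp
    then have 3: "h0 + (xb * ya - yb * xa) * m = 0" unfolding m_def yb_eq using nx
      by (simp add: field_simps)
    show ?thesis using 2 3 h1 yb_eq by auto
  qed
qed

lemma affine_vanishing_at_triangle:
  assumes D: "orient2d p q s \<noteq> 0"
    and "c0 + c1 * fst p + c2 * snd p = 0" "c0 + c1 * fst q + c2 * snd q = 0" "c0 + c1 * fst s + c2 * snd s = 0"
  shows "c0 = 0 \<and> c1 = 0 \<and> c2 = 0"
proof -
  have e1: "c1 * (fst q - fst p) + c2 * (snd q - snd p) = 0"
    and e2: "c1 * (fst s - fst p) + c2 * (snd s - snd p) = 0"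
    using assms by (simp_all add: algebra_simps)
  have "c1 * orient2d p q s = (snd s - snd p) * (c1 * (fst q - fst p) + c2 * (snd q - snd p))
      - (snd q - snd p) * (c1 * (fst s - fst p) + c2 * (snd s - snd p))"
    unfolding orient2d_def by (simp add: algebra_simps)
  then have "c1 = 0" unfolding e1 e2 using D by simp
  have "c2 * orient2d p q s = (fst q - fst p) * (c1 * (fst s - fst p) + c2 * (snd s - snd p))
      - (fst s - fst p) * (c1 * (fst q - fst p) + c2 * (snd q - snd p))"
    unfolding orient2d_def by (simp add: algebra_simps)
  then have "c2 = 0" unfolding e1 e2 using D by simp
  note \<open>c1 = 0\<close> \<open>c2 = 0\<close>
  then show ?thesis using assms(2) by simp
qed

definition affine_piece :: "(row_idx \<Rightarrow> real) \<Rightarrow> pt set \<Rightarrow> pt \<Rightarrow> real" where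
  "affine_piece v T x = v (Inl (T, 0)) + v (Inl (T, 1)) * fst x + v (Inl (T, 2)) * snd x"

definition edge_coef :: "(pt set \<Rightarrow> pt \<times> pt) \<Rightarrow> pt set \<Rightarrow> nat \<Rightarrow> real" where
  "edge_coef ori e k = (if k = 0 then coef_c ori e else if k = 1 then coef_a ori e else coef_b ori e)"

lemma G_mat_Inl: "G_mat \<sigma> ori (Inl (T, k')) (e, k) = (if k' = k then Delta_mat \<sigma> ori T e else 0)"
  by (simp add: G_mat_def)

lemma G_mat_Inr: "G_mat \<sigma> ori (Inr e') (e, k) = (if e' = e then edge_coef ori e k else 0)"
  by (simp add: G_mat_def edge_coef_def)

lemma edge_coef_endpoint:
  assumes "ori e = (A, B)" "X \<in> {A, B}"
  shows "edge_coef ori e 0 + edge_coef ori e 1 * fst X + edge_coef ori e 2 * snd X = 0"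
  using assms by (auto simp: edge_coef_def coef_a_def coef_b_def coef_c_def algebra_simps)

lemma affine_piece_sum:
  "affine_piece (\<Sum>p\<in>P. fscale (c p) (f p)) T x = (\<Sum>p\<in>P. c p * affine_piece (f p) T x)"
proof (induction P rule: infinite_finite_induct)
  case (insert p P)
  then show ?case by (simp add: affine_piece_def fscale_def algebra_simps)
qed (simp_all add: affine_piece_def)

lemma affine_piece_diff: "affine_piece (v - w) T x = affine_piece v T x - affine_piece w T x"
  unfolding affine_piece_def by (simp add: algebra_simps)

interpretation row_space: vector_space fscale
  by unfold_locales (auto simp: fscale_def fun_eq_iff algebra_simps)

locale oriented_triangulation = triangulation +
  fixes ori :: "pt set \<Rightarrow> pt \<times> pt" and \<sigma> :: real
  assumes orientation: "edge_orientation \<T> ori" and rotation_sense: "\<sigma> = 1 \<or> \<sigma> = -1"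
begin

abbreviation kernel :: "(row_idx \<Rightarrow> real) set" where
  "kernel \<equiv> left_kernel_G \<T> \<sigma> ori"

lemma finite_internal_edges: "finite (internal_edges \<T>)"
proof -
  have "internal_edges \<T> \<subseteq> Pow (\<Union>\<T>)" unfolding internal_edges_def mesh_edges_def by blast
  then show ?thesis using finite_triangles finite_triangle by (meson finite_Pow_iff finite_Union finite_subset)
qed

lemma G_column_sum:
  assumes k: "k \<in> {0, 1, 2}"
  shows "(\<Sum>i\<in>G_rows \<T>. G_mat \<sigma> ori i (e, k) * v i)
     = (\<Sum>T\<in>\<T>. Delta_mat \<sigma> ori T e * v (Inl (T, k)))
       + (if e \<in> internal_edges \<T> then edge_coef ori e k * v (Inr e) else 0)"
proof -
  have "(\<Sum>i\<in>G_rows \<T>. G_mat \<sigma> ori i (e, k) * v i)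
      = (\<Sum>i\<in>Inl ` (\<T> \<times> {0, 1, 2}). G_mat \<sigma> ori i (e, k) * v i)
        + (\<Sum>i\<in>Inr ` internal_edges \<T>. G_mat \<sigma> ori i (e, k) * v i)"
    unfolding G_rows_def using finite_triangles finite_internal_edges
    by (intro sum.union_disjoint) auto
  also have "(\<Sum>i\<in>Inl ` (\<T> \<times> {0, 1, 2}). G_mat \<sigma> ori i (e, k) * v i)
      = (\<Sum>x\<in>\<T> \<times> {0, 1, 2}. G_mat \<sigma> ori (Inl x) (e, k) * v (Inl x))"
    by (subst sum.reindex) (auto simp: inj_on_def)
  also have "\<dots> = (\<Sum>T\<in>\<T>. \<Sum>k'\<in>{0, 1, 2}. G_mat \<sigma> ori (Inl (T, k')) (e, k) * v (Inl (T, k')))"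
    unfolding sum.cartesian_product by (simp add: case_prod_unfold)
  also have "\<dots> = (\<Sum>T\<in>\<T>. Delta_mat \<sigma> ori T e * v (Inl (T, k)))"
    by (rule sum.cong) (use k in \<open>auto simp: G_mat_Inl\<close>)
  also have "(\<Sum>i\<in>Inr ` internal_edges \<T>. G_mat \<sigma> ori i (e, k) * v i)
      = (if e \<in> internal_edges \<T> then edge_coef ori e k * v (Inr e) else 0)"
    using finite_internal_edges by (simp add: sum.reindex G_mat_Inr if_distrib[of "\<lambda>x. x * _"] sum.delta cong: if_cong)
  finally show ?thesis .
qed

lemma kernel_iff:
  "v \<in> kernel \<longleftrightarrow> (\<forall>i. i \<notin> G_rows \<T> \<longrightarrow> v i = 0) \<and>
     (\<forall>e\<in>internal_edges \<T>. \<forall>k\<in>{0, 1, 2}.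
        (\<Sum>T\<in>\<T>. Delta_mat \<sigma> ori T e * v (Inl (T, k))) + edge_coef ori e k * v (Inr e) = 0)"
  unfolding left_kernel_G_def G_cols_def using G_column_sum by auto

lemma kernel_subspace: "row_space.subspace kernel"
proof (rule row_space.subspaceI)
  let ?col = "\<lambda>v e k. (\<Sum>T\<in>\<T>. Delta_mat \<sigma> ori T e * v (Inl (T, k))) + edge_coef ori e k * v (Inr e)"
  show "0 \<in> kernel" by (simp add: kernel_iff)
  show "x + y \<in> kernel" if "x \<in> kernel" "y \<in> kernel" for x y
  proof -
    have "?col (x + y) e k = ?col x e k + ?col y e k" for e k by (simp add: sum.distrib algebra_simps)
    then show ?thesis using that unfolding kernel_iff by simp
  qed
  show "fscale c x \<in> kernel" if "x \<in> kernel" for c x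
  proof -
    have "?col (fscale c x) e k = c * ?col x e k" for e k
      by (simp add: fscale_def sum_distrib_left algebra_simps)
    then show ?thesis using that unfolding kernel_iff by (simp add: fscale_def)
  qed
qed

lemma internal_edge_triangles:
  assumes e: "e \<in> internal_edges \<T>"
  obtains T1 T2 A B where "T1 \<in> \<T>" "T2 \<in> \<T>" "T1 \<noteq> T2" "{T\<in>\<T>. e \<subseteq> T} = {T1, T2}"
    "ori e = (A, B)" "e = {A, B}" "A \<noteq> B"
    "Delta_mat \<sigma> ori T2 e = - Delta_mat \<sigma> ori T1 e" "Delta_mat \<sigma> ori T1 e \<noteq> 0"
proof -
  have me: "e \<in> mesh_edges \<T>" and "card {T\<in>\<T>. e \<subseteq> T} = 2"
    using e unfolding internal_edges_def by auto
  then obtain T1 T2 where TT: "{T\<in>\<T>. e \<subseteq> T} = {T1, T2}" "T1 \<noteq> T2" using card_2_iff by metis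
  then have T1: "T1 \<in> \<T>" "e \<subseteq> T1" and T2: "T2 \<in> \<T>" "e \<subseteq> T2" by blast+
  obtain A B where AB: "ori e = (A, B)" by (cases "ori e")
  have eAB: "e = {A, B}" using orientation me AB unfolding edge_orientation_def by force
  have "card e = 2" using me unfolding mesh_edges_def by blast
  then have "A \<noteq> B" using eAB by auto
  have "A \<in> T1" "B \<in> T1" "A \<in> T2" "B \<in> T2" using T1(2) T2(2) eAB by auto
  obtain s1 where s1: "T1 = {A, B, s1}" "s1 \<noteq> A" "s1 \<noteq> B" "orient2d A B s1 \<noteq> 0"
    using triangle_at_edge[OF T1(1) \<open>A \<in> T1\<close> \<open>B \<in> T1\<close> \<open>A \<noteq> B\<close>] .
  obtain s2 where s2: "T2 = {A, B, s2}" "s2 \<noteq> A" "s2 \<noteq> B" "orient2d A B s2 \<noteq> 0"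
    using triangle_at_edge[OF T2(1) \<open>A \<in> T2\<close> \<open>B \<in> T2\<close> \<open>A \<noteq> B\<close>] .
  have "s1 \<noteq> s2"
  proof
    assume "s1 = s2"
    then have "T1 = T2" using s1(1) s2(1) by simp
    then show False using TT(2) by contradiction
  qed
  have opp: "orient2d A B s1 * orient2d A B s2 < 0"
    by (rule orient2d_opposite_sides) (use T1 T2 s1 s2 \<open>A \<noteq> B\<close> \<open>s1 \<noteq> s2\<close> in auto)
  have "T1 - e = {s1}" "T2 - e = {s2}" using s1 s2 eAB by auto
  then have "Delta_mat \<sigma> ori T1 e = \<sigma> * sgn (orient2d A B s1)"
    "Delta_mat \<sigma> ori T2 e = \<sigma> * sgn (orient2d A B s2)"
    unfolding Delta_mat_def delta_def using T1(2) T2(2) AB by simp_all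
  moreover have "\<sigma> \<noteq> 0" using rotation_sense by auto
  ultimately have "Delta_mat \<sigma> ori T2 e = - Delta_mat \<sigma> ori T1 e" "Delta_mat \<sigma> ori T1 e \<noteq> 0"
    using opp by (auto simp: mult_less_0_iff)
  with T1(1) T2(1) TT(2,1) AB eAB \<open>A \<noteq> B\<close> show ?thesis by (rule that)
qed

lemma Delta_sum_internal_edge:
  assumes "T1 \<in> \<T>" "T2 \<in> \<T>" "T1 \<noteq> T2" "{T\<in>\<T>. e \<subseteq> T} = {T1, T2}"
    "Delta_mat \<sigma> ori T2 e = - Delta_mat \<sigma> ori T1 e"
  shows "(\<Sum>T\<in>\<T>. Delta_mat \<sigma> ori T e * w T) = Delta_mat \<sigma> ori T1 e * (w T1 - w T2)"
proof -
  have "(\<Sum>T\<in>\<T>. Delta_mat \<sigma> ori T e * w T) = (\<Sum>T\<in>{T1, T2}. Delta_mat \<sigma> ori T e * w T)"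
    using assms(1,2,4) by (intro sum.mono_neutral_right[OF finite_triangles]) (auto simp: Delta_mat_def)
  then show ?thesis using assms(3,5) by (simp add: algebra_simps)
qed

lemma kernel_edge_equation:
  assumes "v \<in> kernel" "e \<in> internal_edges \<T>" "k \<in> {0, 1, 2}"
  shows "(\<Sum>T\<in>\<T>. Delta_mat \<sigma> ori T e * v (Inl (T, k))) + edge_coef ori e k * v (Inr e) = 0"
  using assms unfolding kernel_iff by blast

text \<open>The column equations of the edge \<open>pq\<close> say that the jump of the pieces across it is
  \<open>\<mu>\<^sub>p\<^sub>q\<close> times the line equation of \<open>pq\<close>, which vanishes at \<open>p\<close>.\<close>

lemma kernel_pieces_agree:
  assumes v: "v \<in> kernel" and T: "T \<in> \<T>" "T' \<in> \<T>" "T \<noteq> T'"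
    and pq: "p \<in> T" "q \<in> T" "p \<in> T'" "q \<in> T'" "p \<noteq> q"
  shows "affine_piece v T p = affine_piece v T' p"
proof -
  note e = internal_edgeI[OF T pq]
  obtain T1 T2 A B where E: "T1 \<in> \<T>" "T2 \<in> \<T>" "T1 \<noteq> T2" "{T\<in>\<T>. {p, q} \<subseteq> T} = {T1, T2}"
    "ori {p, q} = (A, B)" "{p, q} = {A, B}"
    "A \<noteq> B" "Delta_mat \<sigma> ori T2 {p, q} = - Delta_mat \<sigma> ori T1 {p, q}" "Delta_mat \<sigma> ori T1 {p, q} \<noteq> 0"
    using internal_edge_triangles[OF e(1)] .
  define d where "d = Delta_mat \<sigma> ori T1 {p, q}"
  define \<mu> where "\<mu> = v (Inr {p, q})"
  have jump: "d * (v (Inl (T1, k)) - v (Inl (T2, k))) = - edge_coef ori {p, q} k * \<mu>" if "k \<in> {0, 1, 2}" for k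
    using kernel_edge_equation[OF v e(1) that] Delta_sum_internal_edge[OF E(1-4,8)]
    unfolding d_def \<mu>_def by (simp add: eq_neg_iff_add_eq_0)
  have "d * (affine_piece v T1 p - affine_piece v T2 p) = d * (v (Inl (T1, 0)) - v (Inl (T2, 0)))
      + d * (v (Inl (T1, 1)) - v (Inl (T2, 1))) * fst p + d * (v (Inl (T1, 2)) - v (Inl (T2, 2))) * snd p"
    unfolding affine_piece_def by (simp add: algebra_simps)
  also have "\<dots> = - \<mu> * (edge_coef ori {p, q} 0 + edge_coef ori {p, q} 1 * fst p + edge_coef ori {p, q} 2 * snd p)"
    using jump[of 0] jump[of 1] jump[of 2] by (simp only: insert_iff simp_thms) (simp add: algebra_simps)
  also have "\<dots> = 0"
  proof -
    have "p \<in> {A, B}" using E(6) by (metis insertI1)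
    then show ?thesis using edge_coef_endpoint[of ori "{p, q}" A B p] E(5) by simp
  qed
  finally have "affine_piece v T1 p = affine_piece v T2 p" using E(9) unfolding d_def by simp
  moreover have "{T1, T2} = {T, T'}" using E(4) e(2) by simp
  then have "T1 = T \<and> T2 = T' \<or> T1 = T' \<and> T2 = T" by (simp add: doubleton_eq_iff)
  ultimately show ?thesis by auto
qed

lemma kernel_vertex_value:
  assumes v: "v \<in> kernel" and T: "T0 \<in> \<T>" "p \<in> T0" "T \<in> \<T>" "p \<in> T"
  shows "affine_piece v T0 p = affine_piece v T p"
  using star_edge_connected[OF T]
proof (induction rule: rtranclp_induct)
  case (step T' T'')
  then obtain q where q: "q \<noteq> p" "T' \<in> \<T>" "T'' \<in> \<T>" "p \<in> T'" "q \<in> T'" "p \<in> T''" "q \<in> T''"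
    unfolding edge_adjacent_def by blast
  have "affine_piece v T' p = affine_piece v T'' p"
  proof (cases "T' = T''")
    case False
    then show ?thesis using kernel_pieces_agree[OF v q(2,3) False q(4-7)] q(1) by blast
  qed simp
  then show ?case using step.IH by simp
qed simp

lemma kernel_eq_0_if_pieces_0:
  assumes v: "v \<in> kernel" and pieces: "\<And>T k. T \<in> \<T> \<Longrightarrow> k \<in> {0, 1, 2} \<Longrightarrow> v (Inl (T, k)) = 0"
  shows "v = 0"
proof
  have outside: "v i = 0" if "i \<notin> G_rows \<T>" for i using v that unfolding kernel_iff by blast
  fix i
  show "v i = 0 i"
  proof (cases i)
    case (Inl Tk)
    obtain T k where i: "i = Inl (T, k)" using Inl by (cases Tk) auto
    show ?thesis
    proof (cases "T \<in> \<T> \<and> k \<in> {0, 1, 2}")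
      case True
      then show ?thesis using pieces i by simp
    next
      case False
      then have "i \<notin> G_rows \<T>" using i unfolding G_rows_def by auto
      then show ?thesis using outside by simp
    qed
  next
    case (Inr e)
    show ?thesis
    proof (cases "e \<in> internal_edges \<T>")
      case True
      then have coef: "edge_coef ori e k * v (Inr e) = 0" if "k \<in> {0, 1, 2}" for k
        using kernel_edge_equation[OF v True that] pieces that by simp
      obtain T1 T2 A B where E: "T1 \<in> \<T>" "T2 \<in> \<T>" "T1 \<noteq> T2" "{T\<in>\<T>. e \<subseteq> T} = {T1, T2}"
        "ori e = (A, B)" "e = {A, B}" "A \<noteq> B"
        "Delta_mat \<sigma> ori T2 e = - Delta_mat \<sigma> ori T1 e" "Delta_mat \<sigma> ori T1 e \<noteq> 0"
        using internal_edge_triangles[OF True] .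
      have "edge_coef ori e 1 \<noteq> 0 \<or> edge_coef ori e 2 \<noteq> 0"
        using E(5,7) by (auto simp: edge_coef_def coef_a_def coef_b_def prod_eq_iff)
      then have "v (Inr e) = 0" using coef[of 1] coef[of 2] by auto
      then show ?thesis using Inr by simp
    next
      case False
      then show ?thesis using outside Inr unfolding G_rows_def by auto
    qed
  qed
qed

lemma edge_multiplier_exists:
  fixes u :: "pt set \<Rightarrow> nat \<Rightarrow> real"
  assumes e: "e \<in> internal_edges \<T>"
    and agree: "\<And>T T' x. T \<in> \<T> \<Longrightarrow> T' \<in> \<T> \<Longrightarrow> x \<in> T \<Longrightarrow> x \<in> T' \<Longrightarrow>
      u T 0 + u T 1 * fst x + u T 2 * snd x = u T' 0 + u T' 1 * fst x + u T' 2 * snd x"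
  shows "\<exists>m. \<forall>k\<in>{0, 1, 2}. (\<Sum>T\<in>\<T>. Delta_mat \<sigma> ori T e * u T k) + edge_coef ori e k * m = 0"
proof -
  obtain T1 T2 A B where E: "T1 \<in> \<T>" "T2 \<in> \<T>" "T1 \<noteq> T2" "{T\<in>\<T>. e \<subseteq> T} = {T1, T2}"
    "ori e = (A, B)" "e = {A, B}" "A \<noteq> B"
    "Delta_mat \<sigma> ori T2 e = - Delta_mat \<sigma> ori T1 e" "Delta_mat \<sigma> ori T1 e \<noteq> 0"
    using internal_edge_triangles[OF e] .
  define h where "h k = Delta_mat \<sigma> ori T1 e * (u T1 k - u T2 k)" for k
  have sums: "(\<Sum>T\<in>\<T>. Delta_mat \<sigma> ori T e * u T k) = h k" for k
    unfolding h_def by (rule Delta_sum_internal_edge[OF E(1-4,8)])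
  have "A \<in> T1" "B \<in> T1" "A \<in> T2" "B \<in> T2" using E(4,6) by blast+
  then have "h 0 + h 1 * fst X + h 2 * snd X = 0" if "X \<in> {A, B}" for X
  proof -
    have "h 0 + h 1 * fst X + h 2 * snd X = Delta_mat \<sigma> ori T1 e *
        ((u T1 0 + u T1 1 * fst X + u T1 2 * snd X) - (u T2 0 + u T2 1 * fst X + u T2 2 * snd X))"
      unfolding h_def by (simp add: algebra_simps)
    then show ?thesis using agree[OF E(1,2), of X] that \<open>A \<in> T1\<close> \<open>B \<in> T1\<close> \<open>A \<in> T2\<close> \<open>B \<in> T2\<close>
      by auto
  qed
  then obtain m where "h 0 + (fst B * snd A - snd B * fst A) * m = 0" "h 1 + (snd B - snd A) * m = 0"
    "h 2 + (fst A - fst B) * m = 0"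
    using affine_vanishing_at_two_points[of "fst A" "snd A" "fst B" "snd B"] E(7)
    by (metis insertCI prod.collapse)
  then show ?thesis
    unfolding sums using E(5) by (auto simp: edge_coef_def coef_a_def coef_b_def coef_c_def)
qed

lemma kernel_vector_with_pieces:
  fixes u :: "pt set \<Rightarrow> nat \<Rightarrow> real"
  assumes agree: "\<And>T T' x. T \<in> \<T> \<Longrightarrow> T' \<in> \<T> \<Longrightarrow> x \<in> T \<Longrightarrow> x \<in> T' \<Longrightarrow>
      u T 0 + u T 1 * fst x + u T 2 * snd x = u T' 0 + u T' 1 * fst x + u T' 2 * snd x"
  shows "\<exists>v\<in>kernel. \<forall>T\<in>\<T>. \<forall>k\<in>{0, 1, 2}. v (Inl (T, k)) = u T k"
proof -
  have "\<exists>m. \<forall>k\<in>{0, 1, 2}. (\<Sum>T\<in>\<T>. Delta_mat \<sigma> ori T e * u T k) + edge_coef ori e k * m = 0"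
    if "e \<in> internal_edges \<T>" for e
    using edge_multiplier_exists[OF that agree] .
  then obtain \<mu> where \<mu>: "\<And>e k. e \<in> internal_edges \<T> \<Longrightarrow> k \<in> {0, 1, 2} \<Longrightarrow>
      (\<Sum>T\<in>\<T>. Delta_mat \<sigma> ori T e * u T k) + edge_coef ori e k * \<mu> e = 0"
    by metis
  define v :: "row_idx \<Rightarrow> real" where
    "v i = (case i of Inl (T, k) \<Rightarrow> if T \<in> \<T> \<and> k \<in> {0, 1, 2} then u T k else 0
      | Inr e \<Rightarrow> if e \<in> internal_edges \<T> then \<mu> e else 0)" for i
  have "v \<in> kernel"
    unfolding kernel_iff
  proof (intro conjI allI impI ballI)
    fix i assume "i \<notin> G_rows \<T>"
    then show "v i = 0" unfolding v_def G_rows_def by (cases i) auto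
  next
    fix e and k :: nat assume ek: "e \<in> internal_edges \<T>" "k \<in> {0, 1, 2}"
    have "(\<Sum>T\<in>\<T>. Delta_mat \<sigma> ori T e * v (Inl (T, k))) = (\<Sum>T\<in>\<T>. Delta_mat \<sigma> ori T e * u T k)"
      by (rule sum.cong) (use ek in \<open>auto simp: v_def\<close>)
    then show "(\<Sum>T\<in>\<T>. Delta_mat \<sigma> ori T e * v (Inl (T, k))) + edge_coef ori e k * v (Inr e) = 0"
      using \<mu>[OF ek] ek by (simp add: v_def)
  qed
  moreover have "\<forall>T\<in>\<T>. \<forall>k\<in>{0, 1, 2}. v (Inl (T, k)) = u T k" unfolding v_def by simp
  ultimately show ?thesis by blast
qed

end

section \<open>Hat functions\<close>

definition hat_coef :: "pt set \<Rightarrow> pt \<Rightarrow> nat \<Rightarrow> real" where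
  "hat_coef T p = (SOME c. \<forall>x\<in>T. c 0 + c 1 * fst x + c 2 * snd x = (if x = p then 1 else 0))"

context triangulation
begin

lemma hat_coef_eval:
  assumes T: "T \<in> \<T>" "x \<in> T"
  shows "hat_coef T p 0 + hat_coef T p 1 * fst x + hat_coef T p 2 * snd x = (if x = p then 1 else 0)"
proof -
  have "\<exists>c :: nat \<Rightarrow> real. \<forall>x\<in>T. c 0 + c 1 * fst x + c 2 * snd x = (if x = p then 1 else 0)"
  proof (cases "p \<in> T")
    case False
    then show ?thesis by (intro exI[of _ "\<lambda>_. 0"]) auto
  next
    case True
    obtain q s where qs: "T = {p, q, s}" "p \<noteq> q" "p \<noteq> s" "q \<noteq> s" "orient2d p q s \<noteq> 0"
      using triangle_at_vertex[OF T(1) True] by metis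
    define D where "D = orient2d q s p"
    have "D \<noteq> 0" unfolding D_def orient2d_rotate(1)[of q s p] by (rule qs(5))
    define c :: "nat \<Rightarrow> real" where "c k = (if k = 0 then (snd s - snd q) * fst q - (fst s - fst q) * snd q
      else if k = 1 then snd q - snd s else fst s - fst q) / D" for k
    have "c 0 + c 1 * fst x + c 2 * snd x = orient2d q s x / D" for x
    proof -
      have "c 0 + c 1 * fst x + c 2 * snd x = ((snd s - snd q) * fst q - (fst s - fst q) * snd q
          + (snd q - snd s) * fst x + (fst s - fst q) * snd x) / D"
        unfolding c_def by (simp add: add_divide_distrib)
      also have "\<dots> = orient2d q s x / D" by (simp add: orient2d_def algebra_simps)
      finally show ?thesis .
    qed
    moreover have "orient2d q s x / D = (if x = p then 1 else 0)" if x: "x \<in> T" for x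
    proof -
      consider "x = p" | "x = q" | "x = s" using x unfolding qs(1) by blast
      then show ?thesis using \<open>D \<noteq> 0\<close> qs(2,3) unfolding D_def by cases auto
    qed
    ultimately show ?thesis by (intro exI[of _ c]) simp
  qed
  from someI_ex[OF this] T(2) show ?thesis unfolding hat_coef_def by blast
qed

end

context oriented_triangulation
begin

definition hat :: "pt \<Rightarrow> row_idx \<Rightarrow> real" where
  "hat p = (SOME v. v \<in> kernel \<and> (\<forall>T\<in>\<T>. \<forall>k\<in>{0, 1, 2}. v (Inl (T, k)) = hat_coef T p k))"

lemma hat_in_kernel: "hat p \<in> kernel"
  and hat_pieces: "T \<in> \<T> \<Longrightarrow> k \<in> {0, 1, 2} \<Longrightarrow> hat p (Inl (T, k)) = hat_coef T p k"
proof -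
  have agree: "hat_coef T p 0 + hat_coef T p 1 * fst x + hat_coef T p 2 * snd x
      = hat_coef T' p 0 + hat_coef T' p 1 * fst x + hat_coef T' p 2 * snd x"
    if "T \<in> \<T>" "T' \<in> \<T>" "x \<in> T" "x \<in> T'" for T T' x
    using hat_coef_eval that by simp
  have "\<exists>v. v \<in> kernel \<and> (\<forall>T\<in>\<T>. \<forall>k\<in>{0, 1, 2}. v (Inl (T, k)) = hat_coef T p k)"
    using kernel_vector_with_pieces[of "\<lambda>T. hat_coef T p", OF agree] by blast
  then have "hat p \<in> kernel \<and> (\<forall>T\<in>\<T>. \<forall>k\<in>{0, 1, 2}. hat p (Inl (T, k)) = hat_coef T p k)"
    unfolding hat_def by (rule someI_ex)
  then show "hat p \<in> kernel" "T \<in> \<T> \<Longrightarrow> k \<in> {0, 1, 2} \<Longrightarrow> hat p (Inl (T, k)) = hat_coef T p k"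
    by blast+
qed

lemma affine_piece_hat:
  assumes "T \<in> \<T>" "x \<in> T"
  shows "affine_piece (hat p) T x = (if x = p then 1 else 0)"
  unfolding affine_piece_def using hat_pieces[OF assms(1)] hat_coef_eval[OF assms] by simp

lemma affine_piece_hat_combination:
  assumes "T \<in> \<T>" "x \<in> T"
  shows "affine_piece (\<Sum>p\<in>mesh_vertices \<T>. fscale (g p) (hat p)) T x = g x"
proof -
  have "x \<in> mesh_vertices \<T>" using assms unfolding mesh_vertices_def by blast
  then show ?thesis
    using finite_mesh_vertices by (simp add: affine_piece_sum affine_piece_hat[OF assms] if_distrib sum.delta
      cong: if_cong)
qed

lemma inj_on_hat: "inj_on hat (mesh_vertices \<T>)"
proof
  fix p p' assume p: "p \<in> mesh_vertices \<T>" and "hat p = hat p'"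
  obtain T where T: "T \<in> \<T>" "p \<in> T" using p unfolding mesh_vertices_def by blast
  have "affine_piece (hat p') T p = 1" using affine_piece_hat[OF T, of p] \<open>hat p = hat p'\<close> by simp
  then show "p = p'" using affine_piece_hat[OF T, of p'] by (simp split: if_splits)
qed

lemma hat_independent: "\<not> row_space.dependent (hat ` mesh_vertices \<T>)"
proof
  assume "row_space.dependent (hat ` mesh_vertices \<T>)"
  then obtain u where u: "\<exists>w\<in>hat ` mesh_vertices \<T>. u w \<noteq> 0"
    "(\<Sum>w\<in>hat ` mesh_vertices \<T>. fscale (u w) w) = 0"
    unfolding row_space.dependent_finite[OF finite_imageI[OF finite_mesh_vertices]] by blast
  have zero: "(\<Sum>p\<in>mesh_vertices \<T>. fscale (u (hat p)) (hat p)) = 0"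
    using u(2) unfolding sum.reindex[OF inj_on_hat] by (simp add: o_def)
  have "u (hat q) = 0" if q: "q \<in> mesh_vertices \<T>" for q
  proof -
    obtain T where T: "T \<in> \<T>" "q \<in> T" using q unfolding mesh_vertices_def by blast
    show ?thesis using affine_piece_hat_combination[OF T, of "\<lambda>p. u (hat p)"]
      unfolding zero by (simp add: affine_piece_def)
  qed
  then show False using u(1) by blast
qed

lemma span_hat: "row_space.span (hat ` mesh_vertices \<T>) = kernel"
proof
  show "row_space.span (hat ` mesh_vertices \<T>) \<subseteq> kernel"
    using hat_in_kernel by (intro row_space.span_minimal[OF _ kernel_subspace]) blast
  show "kernel \<subseteq> row_space.span (hat ` mesh_vertices \<T>)"
  proof
    fix v assume v: "v \<in> kernel"
    define g where "g q = affine_piece v (SOME T. T \<in> \<T> \<and> q \<in> T) q" for q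
    define w where "w = (\<Sum>p\<in>mesh_vertices \<T>. fscale (g p) (hat p))"
    have w_span: "w \<in> row_space.span (hat ` mesh_vertices \<T>)"
      unfolding w_def by (intro row_space.span_sum row_space.span_scale row_space.span_base) auto
    have vw: "v - w \<in> kernel"
      using row_space.span_minimal[OF _ kernel_subspace] hat_in_kernel w_span
      by (intro row_space.subspace_diff[OF kernel_subspace v]) blast
    have pieces0: "affine_piece (v - w) T x = 0" if "T \<in> \<T>" "x \<in> T" for T x
    proof -
      have "\<exists>T. T \<in> \<T> \<and> x \<in> T" using that by blast
      then have "(SOME T. T \<in> \<T> \<and> x \<in> T) \<in> \<T> \<and> x \<in> (SOME T. T \<in> \<T> \<and> x \<in> T)" by (rule someI_ex)
      then have "g x = affine_piece v T x" unfolding g_def using kernel_vertex_value[OF v _ _ that] by blast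
      then show ?thesis unfolding affine_piece_diff w_def affine_piece_hat_combination[OF that] by simp
    qed
    have "(v - w) (Inl (T, k)) = 0" if T: "T \<in> \<T>" "k \<in> {0, 1, 2}" for T k
    proof -
      have "T \<noteq> {}" using card_triangle[OF T(1)] by auto
      then obtain a where "a \<in> T" by blast
      then obtain b c where abc: "T = {a, b, c}" "orient2d a b c \<noteq> 0"
        using triangle_at_vertex[OF T(1)] by metis
      have "affine_piece (v - w) T x = 0" if "x \<in> {a, b, c}" for x
        using pieces0[OF T(1)] that abc(1) by simp
      then have "(v - w) (Inl (T, 0)) = 0 \<and> (v - w) (Inl (T, 1)) = 0 \<and> (v - w) (Inl (T, 2)) = 0"
        by (intro affine_vanishing_at_triangle[OF abc(2)]) (auto simp: affine_piece_def)
      then show ?thesis using T(2) by auto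
    qed
    then have "v - w = 0" by (rule kernel_eq_0_if_pieces_0[OF vw])
    then show "v \<in> row_space.span (hat ` mesh_vertices \<T>)" using w_span by simp
  qed
qed

lemma dim_kernel: "row_space.dim kernel = card (mesh_vertices \<T>)"
proof -
  have "row_space.span (hat ` mesh_vertices \<T>) = row_space.span kernel"
    unfolding span_hat using kernel_subspace by (metis row_space.span_eq_iff)
  then have "row_space.dim kernel = card (hat ` mesh_vertices \<T>)"
    by (rule row_space.dim_eq_card[OF _ hat_independent])
  also have "\<dots> = card (mesh_vertices \<T>)" by (rule card_image[OF inj_on_hat])
  finally show ?thesis .
qed

end

theorem proposition5:
  fixes \<Omega> :: "pt set" and \<T> :: "pt set set" and ori :: "pt set \<Rightarrow> pt \<times> pt" and \<sigma> :: real
  assumes "polygonal_domain \<Omega>"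
    and "conforming_triangulation \<Omega> \<T>"
    and "at_most_one_boundary_edge \<Omega> \<T>"
    and "edge_orientation \<T> ori"
    and "\<sigma> = 1 \<or> \<sigma> = -1"
  shows "vector_space.dim fscale (left_kernel_G \<T> \<sigma> ori)
           = card (internal_vertices \<Omega> \<T>) + card (boundary_vertices \<Omega> \<T>)
       \<and> card (internal_vertices \<Omega> \<T>) + card (boundary_vertices \<Omega> \<T>) = card (mesh_vertices \<T>)
       \<and> (\<exists>\<phi> :: pt \<Rightarrow> row_idx \<Rightarrow> real.
            (\<forall>p\<in>mesh_vertices \<T>. \<phi> p \<in> left_kernel_G \<T> \<sigma> ori)
          \<and> inj_on \<phi> (mesh_vertices \<T>)
          \<and> \<not> module.dependent fscale (\<phi> ` mesh_vertices \<T>)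
          \<and> module.span fscale (\<phi> ` mesh_vertices \<T>) = left_kernel_G \<T> \<sigma> ori)"
proof -
  interpret oriented_triangulation \<Omega> \<T> ori \<sigma>
    using assms(1,2,4,5) by unfold_locales
  have "vector_space.dim fscale (left_kernel_G \<T> \<sigma> ori) = card (mesh_vertices \<T>)"
    by (rule dim_kernel)
  moreover note card_internal_boundary_vertices
  moreover have "(\<forall>p\<in>mesh_vertices \<T>. hat p \<in> left_kernel_G \<T> \<sigma> ori)
      \<and> inj_on hat (mesh_vertices \<T>)
      \<and> \<not> module.dependent fscale (hat ` mesh_vertices \<T>)
      \<and> module.span fscale (hat ` mesh_vertices \<T>) = left_kernel_G \<T> \<sigma> ori"
    using hat_in_kernel inj_on_hat hat_independent span_hat by blast
  ultimately show ?thesis by metis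
qed

end
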